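(* Let $>$ be a $\mathcal B$-compatible reduction order. Every fair and non-failing run $(\mathcal E,\varnothing)\vdash^*_{\mathcal I_B}(\varnothing,\mathcal R)$ for an ES $\mathcal E$ in $\mathcal I_B$ produces a $\mathcal B$-complete presentation of $\mathcal E$: $\leftrightarrow^*_{\mathcal E\cup\mathcal B}=\leftrightarrow^*_{\mathcal R\cup\mathcal B}$, $\mathcal R$ is terminating modulo $\mathcal B$ and Church–Rosser modulo $\mathcal B$.
   Context: Terms over a signature $\mathcal F$ and variables. For a set $\mathcal E$ of pairs of terms (equations and rules read as oriented pairs), $s\to_{\mathcal E}t$ iff $s|_p=\ell\sigma$, $t=s[r\sigma]_p$ for some $(\ell,r)\in\mathcal E$, position $p$, substitution $\sigma$; $\leftarrow$ is the inverse, $\leftrightarrow$ the symmetric closure. $\mathcal B$ is a fixed ES with $\mathrm{Var}(\ell)=\mathrm{Var}(r)$ for all $\ell\approx r\in\mathcal B$; $\sim_{\mathcal B}=\leftrightarrow^*_{\mathcal B}$, $\mathcal B^\pm=\mathcal B\cup\{t\approx s\mid s\approx t\in\mathcal B\}$; $\to_{\mathcal R/\mathcal B}=\sim_{\mathcal B}\cdot\to_{\mathcal R}\cdot\sim_{\mathcal B}$; $s\downarrow^\sim_{\mathcal R}t$ iff $s\to^*_{\mathcal R}\cdot\sim_{\mathcal B}\cdot\leftarrow^*_{\mathcal R}t$. Terminating modulo $\mathcal B$: no infinite $\to_{\mathcal R/\mathcal B}$-sequence; Church–Rosser modulo $\mathcal B$: $\leftrightarrow^*_{\mathcal R\cup\mathcal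 B}\subseteq\downarrow^\sim_{\mathcal R}$. A $\mathcal B$-compatible reduction order is a well-founded order on terms closed under contexts and substitutions with $\sim_{\mathcal B}\cdot>\cdot\sim_{\mathcal B}\subseteq>$. The inference system $\mathcal I_B$ (parameterized by $>$) on pairs $(\mathcal E,\mathcal R)$ ($\uplus$ disjoint union, $s\approx^\pm t$ means $s\approx t$ or $t\approx s$): Deduce: $(\mathcal E,\mathcal R)\vdash(\mathcal E\cup\{s\approx t\},\mathcal R)$ if $s\leftarrow_{\mathcal R}\cdot\to_{\mathcal R\cup\mathcal B^\pm}t$. Orient: $(\mathcal E\uplus\{s\approx^\pm t\},\mathcal R)\vdash(\mathcal E,\mathcal R\cup\{s\to t\})$ if $s>t$. Delete: $(\mathcal E\uplus\{s\approx t\},\mathcal R)\vdash(\mathcal E,\mathcal R)$ if $s\sim_{\mathcal B}t$. Simplify: $(\mathcal E\uplus\{s\approx^\pm t\},\mathcal R)\vdash(\mathcal E\cup\{u\approx t\},\mathcal R)$ if $s\to_{\mathcal R}u$. Collapse: $(\mathcal E,\mathcal R\uplus\{s\to t\})\vdash(\mathcal E\cup\{u\approx t\},\mathcal R)$ if $s\to_{\mathcal R}u$. Compose: $(\mathcal E,\mathcal R\uplus\{s\to t\})\vdash(\mathcal E,\mathcal R\cup\{s\to u\})$ if $t\to_{\mathcal R}u$. A run for $\mathcal E$ goes from $(\mathcal E_0,\mathcal R_0)=(\mathcal E,\varnothing)$ to $(\mathcal E_n,\mathcal R_n)$; it fails if $\mathcal E_n\ne\varnothing$, and is fair if $\mathcal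 R_n$ is left-linear and $\mathrm{PCP}(\mathcal R_n)\cup\mathrm{PCP}^\pm(\mathcal R_n,\mathcal B^\pm)\subseteq\ \downarrow^\sim_{\mathcal R_n}\cup\bigcup_{i=0}^n\leftrightarrow_{\mathcal E_i}$. Critical pairs: for sets of oriented pairs $\mathcal R_1,\mathcal R_2$ (equations of $\mathcal B^\pm$ read as oriented pairs), an overlap is $\langle\ell_1\to r_1,p,\ell_2\to r_2\rangle$ with $\ell_i\to r_i$ variants of elements of $\mathcal R_i$ without common variables, $p$ a non-variable position of $\ell_2$, $\ell_1$ and $\ell_2|_p$ unifiable, and the two rules not variants if $p=\epsilon$; with an mgu $\sigma$ it yields the critical pair $\ell_2\sigma[r_1\sigma]_p\approx r_2\sigma$, which is prime if all proper subterms of $\ell_2\sigma|_p$ are normal forms w.r.t. the TRS $\mathcal R$ under consideration. $\mathrm{PCP}(\mathcal R)$: prime critical pairs from overlaps of $\mathcal R$ with itself; $\mathrm{PCP}^\pm(\mathcal R,\mathcal B^\pm)$: prime critical pairs from overlaps between $\mathcal R$ and $\mathcal B^\pm$ in either order. *)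

theory Defs
  imports Main
begin

datatype (funs_term: 'f, vars_term: 'v) "term" = Var 'v | Fun 'f "('f, 'v) term list"

type_synonym ('f, 'v) trs = "(('f, 'v) term \<times> ('f, 'v) term) set"
type_synonym ('f, 'v) subst = "'v \<Rightarrow> ('f, 'v) term"
type_synonym pos = "nat list"

fun subst_apply_term :: "('f, 'v) term \<Rightarrow> ('f, 'v) subst \<Rightarrow> ('f, 'v) term" (infixl "\<cdot>" 67) where
  "Var x \<cdot> \<sigma> = \<sigma> x"
| "Fun f ts \<cdot> \<sigma> = Fun f (map (\<lambda>t. t \<cdot> \<sigma>) ts)"

inductive is_pos :: "('f, 'v) term \<Rightarrow> pos \<Rightarrow> bool" where
  root: "is_pos t []"
| arg: "i < length ts \<Longrightarrow> is_pos (ts ! i) p \<Longrightarrow> is_pos (Fun f ts) (i # p)"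

definition poss :: "('f, 'v) term \<Rightarrow> pos set" where
  "poss t = {p. is_pos t p}"

fun subt_at :: "('f, 'v) term \<Rightarrow> pos \<Rightarrow> ('f, 'v) term" where
  "subt_at t [] = t"
| "subt_at (Fun f ts) (i # p) = subt_at (ts ! i) p"
| "subt_at (Var x) (i # p) = Var x"

fun replace_at :: "('f, 'v) term \<Rightarrow> pos \<Rightarrow> ('f, 'v) term \<Rightarrow> ('f, 'v) term" where
  "replace_at t [] s = s"
| "replace_at (Fun f ts) (i # p) s = Fun f (ts[i := replace_at (ts ! i) p s])"
| "replace_at (Var x) (i # p) s = Var x"

definition is_Var_term :: "('f, 'v) term \<Rightarrow> bool" where
  "is_Var_term t = (\<exists>x. t = Var x)"

definition fun_poss :: "('f, 'v) term \<Rightarrow> pos set" where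
  "fun_poss t = {p \<in> poss t. \<not> is_Var_term (subt_at t p)}"

datatype ('f, 'v) ctxt = Hole | More 'f "('f, 'v) term list" "('f, 'v) ctxt" "('f, 'v) term list"

fun ctxt_apply :: "('f, 'v) ctxt \<Rightarrow> ('f, 'v) term \<Rightarrow> ('f, 'v) term" where
  "ctxt_apply Hole s = s"
| "ctxt_apply (More f ss1 C ss2) s = Fun f (ss1 @ ctxt_apply C s # ss2)"

definition rstep :: "('f, 'v) trs \<Rightarrow> ('f, 'v) trs" where
  "rstep R = {(s, t). \<exists>l r p \<sigma>. (l, r) \<in> R \<and> p \<in> poss s \<and> subt_at s p = l \<cdot> \<sigma>
                        \<and> t = replace_at s p (r \<cdot> \<sigma>)}"

definition sym_step :: "('f, 'v) trs \<Rightarrow> ('f, 'v) trs" where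
  "sym_step E = rstep E \<union> (rstep E)\<inverse>"

definition conv :: "('f, 'v) trs \<Rightarrow> ('f, 'v) trs" where
  "conv E = (sym_step E)\<^sup>*"

definition Bpm :: "('f, 'v) trs \<Rightarrow> ('f, 'v) trs" where
  "Bpm B = B \<union> B\<inverse>"

definition simB :: "('f, 'v) trs \<Rightarrow> ('f, 'v) trs" where
  "simB B = conv B"

definition relstep :: "('f, 'v) trs \<Rightarrow> ('f, 'v) trs \<Rightarrow> ('f, 'v) trs" where
  "relstep B R = simB B O rstep R O simB B"

definition join_mod :: "('f, 'v) trs \<Rightarrow> ('f, 'v) trs \<Rightarrow> ('f, 'v) trs" where
  "join_mod B R = (rstep R)\<^sup>* O simB B O ((rstep R)\<inverse>)\<^sup>*"

definition SN_mod :: "('f, 'v) trs \<Rightarrow> ('f, 'v) trs \<Rightarrow> bool" where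
  "SN_mod B R = (\<not> (\<exists>f :: nat \<Rightarrow> ('f, 'v) term. \<forall>i. (f i, f (Suc i)) \<in> relstep B R))"

definition CR_mod :: "('f, 'v) trs \<Rightarrow> ('f, 'v) trs \<Rightarrow> bool" where
  "CR_mod B R = (conv (R \<union> B) \<subseteq> join_mod B R)"

section \<open>B-compatible reduction orders (gt contains (s,t) iff s > t)\<close>

definition B_compatible_reduction_order :: "('f, 'v) trs \<Rightarrow> ('f, 'v) trs \<Rightarrow> bool" where
  "B_compatible_reduction_order B gt =
     (irrefl gt \<and> trans gt \<and> wf (gt\<inverse>)
      \<and> (\<forall>C s t. (s, t) \<in> gt \<longrightarrow> (ctxt_apply C s, ctxt_apply C t) \<in> gt)
      \<and> (\<forall>\<sigma> s t. (s, t) \<in> gt \<longrightarrow> (s \<cdot> \<sigma>, t \<cdot> \<sigma>) \<in> gt)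
      \<and> simB B O gt O simB B \<subseteq> gt)"

fun linear_term :: "('f, 'v) term \<Rightarrow> bool" where
  "linear_term (Var x) = True"
| "linear_term (Fun f ts) = ((\<forall>t \<in> set ts. linear_term t) \<and>
     (\<forall>i j. i < j \<and> j < length ts \<longrightarrow> vars_term (ts ! i) \<inter> vars_term (ts ! j) = {}))"

definition left_linear :: "('f, 'v) trs \<Rightarrow> bool" where
  "left_linear R = (\<forall>(l, r) \<in> R. linear_term l)"

definition is_mgu :: "('f, 'v) subst \<Rightarrow> ('f, 'v) term \<Rightarrow> ('f, 'v) term \<Rightarrow> bool" where
  "is_mgu \<sigma> s t = (s \<cdot> \<sigma> = t \<cdot> \<sigma> \<and>
     (\<forall>\<tau>. s \<cdot> \<tau> = t \<cdot> \<tau> \<longrightarrow> (\<exists>\<delta>. \<forall>x. \<tau> x = \<sigma> x \<cdot> \<delta>)))"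

definition is_variant :: "('f, 'v) term \<times> ('f, 'v) term \<Rightarrow> ('f, 'v) term \<times> ('f, 'v) term \<Rightarrow> bool" where
  "is_variant lr lr' = (\<exists>\<pi>. bij \<pi> \<and> fst lr' = fst lr \<cdot> (Var \<circ> \<pi>) \<and> snd lr' = snd lr \<cdot> (Var \<circ> \<pi>))"

definition variant_of :: "('f, 'v) term \<times> ('f, 'v) term \<Rightarrow> ('f, 'v) trs \<Rightarrow> bool" where
  "variant_of lr R = (\<exists>lr0 \<in> R. is_variant lr0 lr)"

definition vars_rule :: "('f, 'v) term \<times> ('f, 'v) term \<Rightarrow> 'v set" where
  "vars_rule lr = vars_term (fst lr) \<union> vars_term (snd lr)"

definition NF :: "('f, 'v) trs \<Rightarrow> ('f, 'v) term \<Rightarrow> bool" where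
  "NF R t = (\<nexists>u. (t, u) \<in> rstep R)"

definition prime_redex :: "('f, 'v) trs \<Rightarrow> ('f, 'v) term \<Rightarrow> bool" where
  "prime_redex R u = (\<forall>q \<in> poss u. q \<noteq> [] \<longrightarrow> NF R (subt_at u q))"

definition pcp :: "('f, 'v) trs \<Rightarrow> ('f, 'v) trs \<Rightarrow> ('f, 'v) trs \<Rightarrow> ('f, 'v) trs" where
  "pcp R1 R2 S = {(replace_at (l2 \<cdot> \<sigma>) p (r1 \<cdot> \<sigma>), r2 \<cdot> \<sigma>) | l1 r1 p l2 r2 \<sigma>.
      variant_of (l1, r1) R1 \<and> variant_of (l2, r2) R2 \<and>
      vars_rule (l1, r1) \<inter> vars_rule (l2, r2) = {} \<and>
      p \<in> fun_poss l2 \<and>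
      (p = [] \<longrightarrow> \<not> is_variant (l1, r1) (l2, r2)) \<and>
      is_mgu \<sigma> l1 (subt_at l2 p) \<and>
      prime_redex S (subt_at (l2 \<cdot> \<sigma>) p)}"

definition PCP :: "('f, 'v) trs \<Rightarrow> ('f, 'v) trs" where
  "PCP R = pcp R R R"

definition PCP_pm :: "('f, 'v) trs \<Rightarrow> ('f, 'v) trs \<Rightarrow> ('f, 'v) trs" where
  "PCP_pm R BB = pcp R BB R \<union> pcp BB R R"

inductive IB_step :: "('f, 'v) trs \<Rightarrow> ('f, 'v) trs \<Rightarrow> ('f, 'v) trs \<times> ('f, 'v) trs
    \<Rightarrow> ('f, 'v) trs \<times> ('f, 'v) trs \<Rightarrow> bool" for gt B where
  deduce: "(u, s) \<in> rstep R \<Longrightarrow> (u, t) \<in> rstep (R \<union> Bpm B) \<Longrightarrow>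
      IB_step gt B (E, R) (E \<union> {(s, t)}, R)"
| orient_l: "(s, t) \<in> E \<Longrightarrow> (s, t) \<in> gt \<Longrightarrow>
      IB_step gt B (E, R) (E - {(s, t)}, R \<union> {(s, t)})"
| orient_r: "(t, s) \<in> E \<Longrightarrow> (s, t) \<in> gt \<Longrightarrow>
      IB_step gt B (E, R) (E - {(t, s)}, R \<union> {(s, t)})"
| delete: "(s, t) \<in> E \<Longrightarrow> (s, t) \<in> simB B \<Longrightarrow>
      IB_step gt B (E, R) (E - {(s, t)}, R)"
| simplify_l: "(s, t) \<in> E \<Longrightarrow> (s, u) \<in> rstep R \<Longrightarrow>
      IB_step gt B (E, R) ((E - {(s, t)}) \<union> {(u, t)}, R)"
| simplify_r: "(t, s) \<in> E \<Longrightarrow> (s, u) \<in> rstep R \<Longrightarrow>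
      IB_step gt B (E, R) ((E - {(t, s)}) \<union> {(u, t)}, R)"
| collapse: "(s, t) \<in> R \<Longrightarrow> (s, u) \<in> rstep (R - {(s, t)}) \<Longrightarrow>
      IB_step gt B (E, R) (E \<union> {(u, t)}, R - {(s, t)})"
| compose: "(s, t) \<in> R \<Longrightarrow> (t, u) \<in> rstep (R - {(s, t)}) \<Longrightarrow>
      IB_step gt B (E, R) (E, (R - {(s, t)}) \<union> {(s, u)})"

definition IB_run :: "('f, 'v) trs \<Rightarrow> ('f, 'v) trs \<Rightarrow> ('f, 'v) trs
    \<Rightarrow> (nat \<Rightarrow> ('f, 'v) trs \<times> ('f, 'v) trs) \<Rightarrow> nat \<Rightarrow> bool" where
  "IB_run gt B E run n = (run 0 = (E, {}) \<and> (\<forall>i < n. IB_step gt B (run i) (run (Suc i))))"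

definition fair_run :: "('f, 'v) trs \<Rightarrow> (nat \<Rightarrow> ('f, 'v) trs \<times> ('f, 'v) trs) \<Rightarrow> nat \<Rightarrow> bool" where
  "fair_run B run n = (left_linear (snd (run n)) \<and>
     PCP (snd (run n)) \<union> PCP_pm (snd (run n)) (Bpm B)
       \<subseteq> join_mod B (snd (run n)) \<union> (\<Union>i \<in> {0..n}. sym_step (fst (run i))))"

end

theory Submission
  imports Defs
begin

text \<open>Every inference step stays within the equational theory of \<open>E \<union> B\<close> and keeps all rules
  oriented by \<open>>\<close>, so the rules of the final \<open>R\<close> are \<open>E \<union> B\<close>-consequences and, \<open>>\<close> being
  \<open>B\<close>-compatible, \<open>R\<close> terminates modulo \<open>B\<close>. Tracing the run backwards from \<open>(\<emptyset>, R)\<close>, every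
  equation and rule of the run has a bounded conversion over \<open>R \<union> B\<close>: each of its terms is an end
  point, below an end point, or \<open>B\<close>-equivalent to both. This gives \<open>E \<subseteq> \<leftrightarrow>\<^sup>*\<^sub>R\<^sub>\<union>\<^sub>B\<close>, and, via
  fairness, bounded conversions for all prime critical pairs, which suffices for the critical pair
  lemma modulo \<open>B\<close>. A local peak of an \<open>R\<close>-step with an \<open>R\<close>- or \<open>B\<close>-step out of \<open>u\<close> is resolved
  by a conversion below \<open>u\<close>: variable overlaps by left-linearity of \<open>R\<close> and the variable condition
  on \<open>B\<close>, non-prime overlaps via a smaller inner redex, prime ones by fairness. Well-founded
  induction on \<open>>\<close> then shows that \<open>B\<close>-equivalent terms have \<open>B\<close>-equivalent normal forms.\<close>

section \<open>Positions, substitutions and contexts\<close>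

lemma is_pos_Fun_Cons [simp]: "is_pos (Fun f ts) (i # p) \<longleftrightarrow> i < length ts \<and> is_pos (ts ! i) p"
  by (auto elim: is_pos.cases intro: is_pos.intros)

lemma is_pos_Var_Cons [simp]: "\<not> is_pos (Var x) (i # p)"
  by (auto elim: is_pos.cases)

lemma poss_simps [simp]:
  "[] \<in> poss t"
  "(i # p) \<in> poss (Fun f ts) \<longleftrightarrow> i < length ts \<and> p \<in> poss (ts ! i)"
  "(i # p) \<notin> poss (Var x)"
  by (auto simp: poss_def intro: is_pos.root)

lemma subt_at_append [simp]: "subt_at t (p @ q) = subt_at (subt_at t p) q"
  by (induction t p rule: subt_at.induct) (auto, case_tac q, auto)

lemma poss_append [simp]: "p @ q \<in> poss t \<longleftrightarrow> p \<in> poss t \<and> q \<in> poss (subt_at t p)"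
  by (induction t p rule: subt_at.induct) auto

lemma replace_at_append:
  "p \<in> poss t \<Longrightarrow> replace_at t (p @ q) s = replace_at t p (replace_at (subt_at t p) q s)"
  by (induction t p rule: subt_at.induct) auto

lemma subt_at_replace_at [simp]: "p \<in> poss t \<Longrightarrow> subt_at (replace_at t p s) p = s"
  by (induction t p rule: subt_at.induct) auto

lemma replace_at_subt_at [simp]: "replace_at t p (subt_at t p) = t"
  by (induction t p rule: subt_at.induct) auto

lemma replace_at_replace_at [simp]:
  "p \<in> poss t \<Longrightarrow> replace_at (replace_at t p s) p s' = replace_at t p s'"
  by (induction t p rule: subt_at.induct) auto

lemma poss_replace_at [simp]: "p \<in> poss t \<Longrightarrow> p \<in> poss (replace_at t p s)"
  by (induction t p rule: subt_at.induct) auto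

lemma replace_at_Fun_split:
  assumes "r @ i # p \<in> poss t"
  obtains f ts where "subt_at t r = Fun f ts"
    and "replace_at t (r @ i # p) s = replace_at t r (Fun f (ts[i := replace_at (ts ! i) p s]))"
proof -
  have r: "r \<in> poss t" and ip: "i # p \<in> poss (subt_at t r)" using assms by auto
  obtain f ts where F: "subt_at t r = Fun f ts" using ip by (cases "subt_at t r") auto
  show thesis using that[OF F] replace_at_append[OF r] F by simp
qed

lemma
  assumes "i \<noteq> j" "r @ i # p \<in> poss t"
  shows subt_at_replace_at_parallel:
      "subt_at (replace_at t (r @ i # p) s) (r @ j # q) = subt_at t (r @ j # q)"
    and poss_replace_at_parallel:
      "r @ j # q \<in> poss (replace_at t (r @ i # p) s) \<longleftrightarrow> r @ j # q \<in> poss t"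
proof -
  obtain f ts where F: "subt_at t r = Fun f ts"
    and e: "replace_at t (r @ i # p) s = replace_at t r (Fun f (ts[i := replace_at (ts ! i) p s]))"
    using replace_at_Fun_split[OF assms(2)] .
  have "r \<in> poss t" using assms(2) by simp
  then show "subt_at (replace_at t (r @ i # p) s) (r @ j # q) = subt_at t (r @ j # q)"
    and "r @ j # q \<in> poss (replace_at t (r @ i # p) s) \<longleftrightarrow> r @ j # q \<in> poss t"
    unfolding e using F assms(1) by simp_all
qed

lemma replace_at_parallel_commute:
  assumes "i \<noteq> j" "r @ i # p \<in> poss t" "r @ j # q \<in> poss t"
  shows "replace_at (replace_at t (r @ i # p) s) (r @ j # q) s' =
         replace_at (replace_at t (r @ j # q) s') (r @ i # p) s"
proof -
  obtain f ts where F: "subt_at t r = Fun f ts"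
    and e1: "replace_at t (r @ i # p) s = replace_at t r (Fun f (ts[i := replace_at (ts ! i) p s]))"
    using replace_at_Fun_split[OF assms(2)] .
  have "r \<in> poss t" using assms(2) by simp
  then show ?thesis
    unfolding e1 using F assms by (simp add: replace_at_append list_update_swap)
qed

lemma pos_cases:
  obtains (below) q where "p2 = p1 @ q" | (above) q where "p1 = p2 @ q"
  | (parallel) r i j p q where "i \<noteq> j" "p1 = r @ i # p" "p2 = r @ j # q"
proof (induction p1 arbitrary: p2 thesis)
  case Nil then show ?case by auto
next
  case (Cons a p1)
  show ?case
  proof (cases p2)
    case Nil then show ?thesis using Cons.prems(2) by auto
  next
    case (Cons b p2')
    show ?thesis
    proof (cases "a = b")
      case False
      then show ?thesis using Cons.prems(3)[of a b "[]"] \<open>p2 = b # p2'\<close> by auto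
    next
      case True
      show ?thesis
      proof (rule Cons.IH[of p2'])
        fix q assume "p2' = p1 @ q" then show ?thesis using Cons.prems(1) True \<open>p2 = b # p2'\<close> by auto
      next
        fix q assume "p1 = p2' @ q" then show ?thesis using Cons.prems(2) True \<open>p2 = b # p2'\<close> by auto
      next
        fix r i j p q assume "i \<noteq> j" "p1 = r @ i # p" "p2' = r @ j # q"
        then show ?thesis using Cons.prems(3)[of i j "a # r"] True \<open>p2 = b # p2'\<close> by auto
      qed
    qed
  qed
qed

lemma size_subt_at:
  "p \<in> poss t \<Longrightarrow> size (subt_at t p) \<le> size t \<and> (p \<noteq> [] \<longrightarrow> size (subt_at t p) < size t)"
proof (induction t p rule: subt_at.induct)
  case (2 f ts i p)
  then have i: "i < length ts" "p \<in> poss (ts ! i)" by auto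
  with 2 have "size (subt_at (ts ! i) p) \<le> size (ts ! i)" by auto
  moreover have "size (ts ! i) < size (Fun f ts)"
    using i size_list_estimation'[of "ts ! i" ts "size (ts ! i)" size] by auto
  ultimately show ?case by auto
qed auto

lemma poss_subst: "p \<in> poss t \<Longrightarrow> p \<in> poss (t \<cdot> \<sigma>)"
  by (induction t p rule: subt_at.induct) auto

lemma subt_at_subst: "p \<in> poss t \<Longrightarrow> subt_at (t \<cdot> \<sigma>) p = subt_at t p \<cdot> \<sigma>"
  by (induction t p rule: subt_at.induct) auto

lemma replace_at_subst: "p \<in> poss t \<Longrightarrow> replace_at (t \<cdot> \<sigma>) p (s \<cdot> \<sigma>) = replace_at t p s \<cdot> \<sigma>"
  by (induction t p rule: subt_at.induct) (auto simp: map_update)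

lemma subst_subst: "t \<cdot> \<sigma> \<cdot> \<tau> = t \<cdot> (\<lambda>x. \<sigma> x \<cdot> \<tau>)"
  by (induction t) auto

lemma subst_cong: "(\<And>x. x \<in> vars_term t \<Longrightarrow> \<sigma> x = \<tau> x) \<Longrightarrow> t \<cdot> \<sigma> = t \<cdot> \<tau>"
  by (induction t) auto

lemma subst_eq_vars: "t \<cdot> \<sigma> = t \<cdot> \<tau> \<Longrightarrow> x \<in> vars_term t \<Longrightarrow> \<sigma> x = \<tau> x"
  by (induction t) auto

lemma subst_Var [simp]: "t \<cdot> Var = t"
  by (induction t) (auto simp: map_idI)

lemma subst_fun_upd_notin: "x \<notin> vars_term t \<Longrightarrow> t \<cdot> Var(x := s) = t"
  by (metis fun_upd_other subst_Var subst_cong)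

lemma vars_subst: "vars_term (t \<cdot> \<sigma>) = (\<Union>x \<in> vars_term t. vars_term (\<sigma> x))"
  by (induction t) auto

lemma vars_rename: "vars_term (t \<cdot> (Var \<circ> \<pi>)) = \<pi> ` vars_term t"
  by (induction t) auto

lemma finite_vars_term [simp]: "finite (vars_term t)"
  by (induction t) auto

lemma poss_subst_cases:
  assumes "p \<in> poss (t \<cdot> \<sigma>)"
  obtains (fun_pos) "p \<in> fun_poss t"
  | (var_pos) q1 q2 x where "p = q1 @ q2" "q1 \<in> poss t" "subt_at t q1 = Var x" "q2 \<in> poss (\<sigma> x)"
  using assms
proof (induction t arbitrary: p thesis)
  case (Var x)
  then show ?case by (metis append_Nil poss_simps(1) subst_apply_term.simps(1) subt_at.simps(1))
next
  case (Fun f ts)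
  show ?case
  proof (cases p)
    case Nil then show ?thesis using Fun.prems(1) by (auto simp: fun_poss_def is_Var_term_def)
  next
    case (Cons i p')
    then have i: "i < length ts" "p' \<in> poss (ts ! i \<cdot> \<sigma>)" using Fun.prems(3) by auto
    show ?thesis
    proof (rule Fun.IH[of "ts ! i" p'])
      show "ts ! i \<in> set ts" using i by auto
    next
      assume "p' \<in> fun_poss (ts ! i)"
      then show ?thesis using Fun.prems(1) Cons i by (auto simp: fun_poss_def)
    next
      fix q1 q2 x assume "p' = q1 @ q2" "q1 \<in> poss (ts ! i)" "subt_at (ts ! i) q1 = Var x" "q2 \<in> poss (\<sigma> x)"
      then show ?thesis using Fun.prems(2)[of "i # q1" q2 x] Cons i by auto
    qed (use i in auto)
  qed
qed

lemma vars_term_poss: "x \<in> vars_term t \<longleftrightarrow> (\<exists>q \<in> poss t. subt_at t q = Var x)"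
proof
  show "x \<in> vars_term t \<Longrightarrow> \<exists>q \<in> poss t. subt_at t q = Var x"
  proof (induction t)
    case (Var y) then show ?case by (auto intro: bexI[of _ "[]"])
  next
    case (Fun f ts)
    then obtain i where i: "i < length ts" "x \<in> vars_term (ts ! i)" by (auto simp: in_set_conv_nth)
    with Fun.IH obtain q where "q \<in> poss (ts ! i)" "subt_at (ts ! i) q = Var x" by (meson nth_mem)
    then show ?case using i by (intro bexI[of _ "i # q"]) auto
  qed
  have "q \<in> poss t \<Longrightarrow> subt_at t q = Var x \<Longrightarrow> x \<in> vars_term t" for q
  proof (induction t q rule: subt_at.induct)
    case (2 f ts i p) then show ?case by (auto intro!: bexI[of _ "ts ! i"])
  qed auto
  then show "\<exists>q \<in> poss t. subt_at t q = Var x \<Longrightarrow> x \<in> vars_term t" by blast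
qed

lemma replace_at_eq_ctxt_apply: "p \<in> poss t \<Longrightarrow> \<exists>C. \<forall>s. replace_at t p s = ctxt_apply C s"
proof (induction t p rule: subt_at.induct)
  case (1 t) then show ?case by (auto intro: exI[of _ Hole])
next
  case (2 f ts i p)
  then obtain C where C: "\<forall>s. replace_at (ts ! i) p s = ctxt_apply C s" by auto
  have i: "i < length ts" using 2 by auto
  show ?case
    using C i by (intro exI[of _ "More f (take i ts) C (drop (Suc i) ts)"]) (auto simp: upd_conv_take_nth_drop)
qed auto

lemma replace_at_linear_subst:
  assumes "linear_term l" "q \<in> poss l" "subt_at l q = Var x"
  shows "replace_at (l \<cdot> \<sigma>) q w = l \<cdot> \<sigma>(x := w)"
  using assms
proof (induction l arbitrary: q)
  case (Var y) then show ?case by (cases q) auto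
next
  case (Fun f ts)
  show ?case
  proof (cases q)
    case Nil then show ?thesis using Fun by simp
  next
    case (Cons i q')
    have i: "i < length ts" "q' \<in> poss (ts ! i)" "subt_at (ts ! i) q' = Var x"
      using Fun.prems Cons by auto
    have IH: "replace_at (ts ! i \<cdot> \<sigma>) q' w = ts ! i \<cdot> \<sigma>(x := w)"
      using Fun.IH[of "ts ! i" q'] Fun.prems(1) i by (auto simp: fun_upd_def)
    have xi: "x \<in> vars_term (ts ! i)" unfolding vars_term_poss using i(2,3) by blast
    have other: "ts ! j \<cdot> \<sigma> = ts ! j \<cdot> \<sigma>(x := w)" if "j < length ts" "j \<noteq> i" for j
    proof -
      have "vars_term (ts ! i) \<inter> vars_term (ts ! j) = {}"
        using Fun.prems(1) that i(1) by (metis Int_commute linorder_neqE_nat linear_term.simps(2))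
      then show ?thesis using xi by (intro subst_cong) auto
    qed
    show ?thesis unfolding Cons using i IH other
      by (auto intro!: nth_equalityI simp: nth_list_update fun_upd_def)
  qed
qed

section \<open>Rewrite steps and conversions\<close>

definition rstep_at :: "('f, 'v) trs \<Rightarrow> pos \<Rightarrow> ('f, 'v) trs" where
  "rstep_at R p = {(s, t). \<exists>l r \<sigma>. (l, r) \<in> R \<and> p \<in> poss s \<and> subt_at s p = l \<cdot> \<sigma>
                        \<and> t = replace_at s p (r \<cdot> \<sigma>)}"

lemma rstep_eq_UN_rstep_at: "rstep R = (\<Union>p. rstep_at R p)"
  unfolding rstep_def rstep_at_def by blast

lemma rstep_atI:
  "(l, r) \<in> R \<Longrightarrow> p \<in> poss s \<Longrightarrow> subt_at s p = l \<cdot> \<sigma> \<Longrightarrow> t = replace_at s p (r \<cdot> \<sigma>)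
    \<Longrightarrow> (s, t) \<in> rstep_at R p"
  unfolding rstep_at_def by blast

lemma rstep_atE:
  assumes "(s, t) \<in> rstep_at R p"
  obtains l r \<sigma> where "(l, r) \<in> R" "p \<in> poss s" "subt_at s p = l \<cdot> \<sigma>" "t = replace_at s p (r \<cdot> \<sigma>)"
  using assms unfolding rstep_at_def by blast

lemma rstepI:
  "(l, r) \<in> R \<Longrightarrow> p \<in> poss s \<Longrightarrow> subt_at s p = l \<cdot> \<sigma> \<Longrightarrow> t = replace_at s p (r \<cdot> \<sigma>)
    \<Longrightarrow> (s, t) \<in> rstep R"
  unfolding rstep_def by blast

lemma rstepE:
  assumes "(s, t) \<in> rstep R"
  obtains l r p \<sigma> where "(l, r) \<in> R" "p \<in> poss s" "subt_at s p = l \<cdot> \<sigma>" "t = replace_at s p (r \<cdot> \<sigma>)"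
  using assms unfolding rstep_def by blast

lemma rstep_at_imp_rstep: "(s, t) \<in> rstep_at R p \<Longrightarrow> (s, t) \<in> rstep R"
  unfolding rstep_eq_UN_rstep_at by blast

lemma rstep_rule: "(l, r) \<in> R \<Longrightarrow> (l \<cdot> \<sigma>, r \<cdot> \<sigma>) \<in> rstep R"
  by (rule rstepI[of l r R "[]"]) auto

lemma rstep_replace_at:
  assumes "(s, t) \<in> rstep R" "p \<in> poss u"
  shows "(replace_at u p s, replace_at u p t) \<in> rstep R"
  using assms(1)
proof (cases rule: rstepE)
  case (1 l r q \<sigma>)
  then show ?thesis using assms(2)
    by (intro rstepI[of l r R "p @ q" _ \<sigma>]) (auto simp: replace_at_append)
qed

lemma rstep_subst:
  assumes "(s, t) \<in> rstep R"
  shows "(s \<cdot> \<sigma>, t \<cdot> \<sigma>) \<in> rstep R"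
  using assms
proof (cases rule: rstepE)
  case (1 l r q \<tau>)
  then show ?thesis
    by (intro rstepI[of l r R q _ "\<lambda>x. \<tau> x \<cdot> \<sigma>"])
       (auto simp: poss_subst subt_at_subst subst_subst replace_at_subst[symmetric])
qed

lemma rsteps_replace_at:
  "(s, t) \<in> (rstep R)\<^sup>* \<Longrightarrow> p \<in> poss u \<Longrightarrow> (replace_at u p s, replace_at u p t) \<in> (rstep R)\<^sup>*"
  by (induction rule: rtrancl_induct) (auto intro: rtrancl_into_rtrancl rstep_replace_at)

lemma rstep_NF_subst: "\<not> NF R t \<Longrightarrow> \<not> NF R (t \<cdot> \<delta>)"
  unfolding NF_def using rstep_subst by blast

lemma NF_rsteps: "NF R s \<Longrightarrow> (s, t) \<in> (rstep R)\<^sup>* \<Longrightarrow> t = s"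
  unfolding NF_def by (metis converse_rtranclE)

lemma rstep_union: "rstep (R \<union> S) = rstep R \<union> rstep S"
  unfolding rstep_def by blast

lemma rstep_converse: "rstep (R\<inverse>) = (rstep R)\<inverse>"
proof -
  have "(t, s) \<in> rstep R" if "(s, t) \<in> rstep (R\<inverse>)" for R :: "('f, 'v) trs" and s t
    using that
  proof (cases rule: rstepE)
    case (1 l r p \<sigma>)
    then show ?thesis
      by (intro rstepI[of r l R p _ \<sigma>]) (auto, metis replace_at_replace_at replace_at_subt_at)
  qed
  from this[of _ _ R] this[of _ _ "R\<inverse>"] show ?thesis by auto
qed

lemma sym_step_Bpm: "sym_step B = rstep (Bpm B)"
  unfolding sym_step_def Bpm_def rstep_union rstep_converse by simp

lemma converse_sym_step [simp]: "(sym_step E)\<inverse> = sym_step E"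
  unfolding sym_step_def by auto

lemma sym_step_replace_at:
  "(s, t) \<in> sym_step E \<Longrightarrow> p \<in> poss u \<Longrightarrow> (replace_at u p s, replace_at u p t) \<in> sym_step E"
  unfolding sym_step_def by (auto intro: rstep_replace_at)

lemma sym_step_subst: "(s, t) \<in> sym_step E \<Longrightarrow> (s \<cdot> \<sigma>, t \<cdot> \<sigma>) \<in> sym_step E"
  unfolding sym_step_def by (auto intro: rstep_subst)

lemma conv_replace_at:
  "(s, t) \<in> conv E \<Longrightarrow> p \<in> poss u \<Longrightarrow> (replace_at u p s, replace_at u p t) \<in> conv E"
  unfolding conv_def by (induction rule: rtrancl_induct) (auto intro: rtrancl_into_rtrancl sym_step_replace_at)

lemma conv_subst: "(s, t) \<in> conv E \<Longrightarrow> (s \<cdot> \<sigma>, t \<cdot> \<sigma>) \<in> conv E"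
  unfolding conv_def by (induction rule: rtrancl_induct) (auto intro: rtrancl_into_rtrancl sym_step_subst)

lemma conv_sym: "(s, t) \<in> conv E \<Longrightarrow> (t, s) \<in> conv E"
  unfolding conv_def using rtrancl_converseI[of s t "sym_step E"] by (simp add: rtrancl_converse)

lemma conv_trans: "(s, t) \<in> conv E \<Longrightarrow> (t, u) \<in> conv E \<Longrightarrow> (s, u) \<in> conv E"
  unfolding conv_def by simp

lemma rstep_subset_conv: "rstep E \<subseteq> conv E"
  unfolding conv_def sym_step_def by auto

lemma subset_conv: "E \<subseteq> conv E"
  using rstep_rule[of _ _ E Var] rstep_subset_conv by auto

lemma rstep_subset_conv_if_subset:
  assumes "E \<subseteq> conv F" shows "rstep E \<subseteq> conv F"
proof clarify
  fix s t assume "(s, t) \<in> rstep E"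
  then show "(s, t) \<in> conv F"
  proof (cases rule: rstepE)
    case (1 l r p \<sigma>)
    have "(l \<cdot> \<sigma>, r \<cdot> \<sigma>) \<in> conv F" using assms 1(1) by (auto intro: conv_subst)
    from conv_replace_at[OF this 1(2)] show ?thesis using 1 by (metis replace_at_subt_at)
  qed
qed

lemma conv_subset_conv_if_subset:
  assumes "E \<subseteq> conv F" shows "conv E \<subseteq> conv F"
proof -
  have "sym_step E \<subseteq> conv F"
    using rstep_subset_conv_if_subset[OF assms] unfolding sym_step_def by (auto intro: conv_sym)
  then show ?thesis
    unfolding conv_def[of E] by (metis conv_def rtrancl_subset_rtrancl rtrancl_idemp)
qed

lemma rsteps_Fun_args:
  assumes "length ts = length ss" "\<forall>i < length ts. (ts ! i, ss ! i) \<in> (rstep R)\<^sup>*"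
  shows "(Fun f ts, Fun f ss) \<in> (rstep R)\<^sup>*"
proof -
  have "(Fun f (us @ ts), Fun f (us @ ss)) \<in> (rstep R)\<^sup>*" for us
    using assms
  proof (induction ts ss arbitrary: us rule: list_induct2)
    case (Cons t ts s ss)
    have "(t, s) \<in> (rstep R)\<^sup>*" using Cons.prems by force
    from rsteps_replace_at[OF this, of "[length us]" "Fun f (us @ t # ts)"]
    have "(Fun f (us @ t # ts), Fun f (us @ s # ts)) \<in> (rstep R)\<^sup>*" by simp
    moreover have "(Fun f ((us @ [s]) @ ts), Fun f ((us @ [s]) @ ss)) \<in> (rstep R)\<^sup>*"
      using Cons.prems by (intro Cons.IH) auto
    ultimately show ?case by simp
  qed simp
  from this[of "[]"] show ?thesis by simp
qed

lemma rsteps_subst_fun_upd: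
  assumes "(\<sigma> x, s) \<in> rstep R"
  shows "(t \<cdot> \<sigma>, t \<cdot> \<sigma>(x := s)) \<in> (rstep R)\<^sup>*"
  using assms by (induction t) (auto intro!: rsteps_Fun_args)

text \<open>Without linearity, the other occurrences of the variable are reduced too.\<close>
lemma replace_at_subst_rsteps:
  assumes "q \<in> poss l" "subt_at l q = Var x" "(\<sigma> x, s) \<in> rstep R"
  shows "(replace_at (l \<cdot> \<sigma>) q s, l \<cdot> \<sigma>(x := s)) \<in> (rstep R)\<^sup>*"
  using assms
proof (induction l arbitrary: q)
  case (Fun f ts)
  show ?case
  proof (cases q)
    case (Cons i q')
    have i: "i < length ts" "q' \<in> poss (ts ! i)" "subt_at (ts ! i) q' = Var x"
      using Fun.prems Cons by auto
    have IH: "(replace_at (ts ! i \<cdot> \<sigma>) q' s, ts ! i \<cdot> \<sigma>(x := s)) \<in> (rstep R)\<^sup>*"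
      using Fun.IH[of "ts ! i" q'] i Fun.prems(3) by (auto simp: fun_upd_def)
    show ?thesis unfolding Cons using i IH rsteps_subst_fun_upd[where \<sigma> = \<sigma> and x = x, OF Fun.prems(3)]
      by (auto intro!: rsteps_Fun_args simp: nth_list_update fun_upd_def)
  qed (use Fun in simp)
next
  case (Var y) then show ?case by (cases q) auto
qed

section \<open>Most general unifiers\<close>

type_synonym ('f, 'v) eqs = "(('f, 'v) term \<times> ('f, 'v) term) list"

definition unifies :: "('f, 'v) subst \<Rightarrow> ('f, 'v) eqs \<Rightarrow> bool" where
  "unifies \<tau> E \<longleftrightarrow> (\<forall>(a, b) \<in> set E. a \<cdot> \<tau> = b \<cdot> \<tau>)"

definition is_mgu_eqs :: "('f, 'v) subst \<Rightarrow> ('f, 'v) eqs \<Rightarrow> bool" where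
  "is_mgu_eqs \<sigma> E \<longleftrightarrow> unifies \<sigma> E \<and> (\<forall>\<tau>. unifies \<tau> E \<longrightarrow> (\<exists>\<delta>. \<forall>x. \<tau> x = \<sigma> x \<cdot> \<delta>))"

definition vars_eqs :: "('f, 'v) eqs \<Rightarrow> 'v set" where
  "vars_eqs E = (\<Union>(a, b) \<in> set E. vars_term a \<union> vars_term b)"

definition size_eqs :: "('f, 'v) eqs \<Rightarrow> nat" where
  "size_eqs E = sum_list (map (\<lambda>(a, b). size a + size b + 1) E)"

lemma finite_vars_eqs [simp]: "finite (vars_eqs E)"
  unfolding vars_eqs_def by auto

lemma occurs_check: "x \<in> vars_term t \<Longrightarrow> t \<noteq> Var x \<Longrightarrow> \<tau> x \<noteq> t \<cdot> \<tau>"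
proof -
  have "x \<in> vars_term t \<Longrightarrow> size (\<tau> x) \<le> size (t \<cdot> \<tau>) \<and> (t \<noteq> Var x \<longrightarrow> size (\<tau> x) < size (t \<cdot> \<tau>))"
  proof (induction t)
    case (Fun f ts)
    then obtain t where t: "t \<in> set ts" "x \<in> vars_term t" by auto
    with Fun.IH have "size (\<tau> x) \<le> size (t \<cdot> \<tau>)" by auto
    moreover have "size (t \<cdot> \<tau>) < size (Fun f ts \<cdot> \<tau>)"
      using t(1) size_list_estimation'[of "t \<cdot> \<tau>" "map (\<lambda>t. t \<cdot> \<tau>) ts" "size (t \<cdot> \<tau>)" size] by auto
    ultimately show ?case by auto
  qed auto
  then show "x \<in> vars_term t \<Longrightarrow> t \<noteq> Var x \<Longrightarrow> \<tau> x \<noteq> t \<cdot> \<tau>" by fastforce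
qed

lemma unifies_Cons_swap: "unifies \<tau> ((b, a) # E) \<longleftrightarrow> unifies \<tau> ((a, b) # E)"
  unfolding unifies_def by auto

lemma unifies_decompose:
  "length as = length bs \<Longrightarrow>
    unifies \<tau> ((Fun f as, Fun f bs) # E) \<longleftrightarrow> unifies \<tau> (zip as bs @ E)"
  unfolding unifies_def
  by (induction as bs rule: list_induct2) (auto simp: map_eq_conv)

lemma subst_fun_upd_absorb: "\<tau> x = c \<cdot> \<tau> \<Longrightarrow> t \<cdot> Var(x := c) \<cdot> \<tau> = t \<cdot> \<tau>"
  unfolding subst_subst by (intro subst_cong) auto

lemma unifies_Var_elim:
  "unifies \<tau> ((Var x, c) # E) \<Longrightarrow> unifies \<tau> (map (\<lambda>(a, b). (a \<cdot> Var(x := c), b \<cdot> Var(x := c))) E)"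
  using subst_fun_upd_absorb[of \<tau> x c] unfolding unifies_def by auto

lemma is_mgu_eqs_Var_elim:
  assumes nx: "x \<notin> vars_term c"
    and mgu: "is_mgu_eqs \<sigma> (map (\<lambda>(a, b). (a \<cdot> Var(x := c), b \<cdot> Var(x := c))) E)"
  shows "is_mgu_eqs (\<lambda>y. (Var(x := c)) y \<cdot> \<sigma>) ((Var x, c) # E)"
proof -
  define \<theta> where "\<theta> = Var(x := c)"
  have c\<theta>: "c \<cdot> \<theta> = c" using nx by (simp add: \<theta>_def subst_fun_upd_notin)
  have comp: "t \<cdot> (\<lambda>y. \<theta> y \<cdot> \<sigma>) = t \<cdot> \<theta> \<cdot> \<sigma>" for t by (simp add: subst_subst)
  have "unifies (\<lambda>y. \<theta> y \<cdot> \<sigma>) ((Var x, c) # E)"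
    using mgu c\<theta> unfolding is_mgu_eqs_def unifies_def comp \<theta>_def[symmetric] by (auto simp: \<theta>_def)
  moreover have "\<exists>\<delta>. \<forall>y. \<tau> y = \<theta> y \<cdot> \<sigma> \<cdot> \<delta>" if u: "unifies \<tau> ((Var x, c) # E)" for \<tau>
  proof -
    have xc: "\<tau> x = c \<cdot> \<tau>" using u unfolding unifies_def by auto
    obtain \<delta> where \<delta>: "\<forall>y. \<tau> y = \<sigma> y \<cdot> \<delta>"
      using mgu unifies_Var_elim[OF u] unfolding is_mgu_eqs_def \<theta>_def by blast
    have "\<tau> y = \<theta> y \<cdot> \<sigma> \<cdot> \<delta>" for y
      using subst_fun_upd_absorb[OF xc, of "Var y"] \<delta> by (simp add: subst_subst \<theta>_def)
    then show ?thesis by blast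
  qed
  ultimately show ?thesis unfolding is_mgu_eqs_def \<theta>_def by blast
qed

lemma vars_eqs_decompose: "vars_eqs (zip as bs @ E) \<subseteq> vars_eqs ((Fun f as, Fun g bs) # E)"
  unfolding vars_eqs_def by (auto dest: set_zip_leftD set_zip_rightD)

lemma size_eqs_decompose:
  assumes "length as = length bs"
  shows "size_eqs (zip as bs @ E) < size_eqs ((Fun f as, Fun g bs) # E)"
proof -
  have "size_eqs (zip as bs) \<le> size_list size as + size_list size bs"
    using assms unfolding size_eqs_def by (induction as bs rule: list_induct2) auto
  then show ?thesis by (simp add: size_eqs_def)
qed

lemma card_vars_eqs_Var_elim:
  assumes "x \<notin> vars_term c"
  shows "card (vars_eqs (map (\<lambda>(a, b). (a \<cdot> Var(x := c), b \<cdot> Var(x := c))) E))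
    < card (vars_eqs ((Var x, c) # E))"
proof -
  define \<theta> where "\<theta> = Var(x := c)"
  define E' where "E' = map (\<lambda>(a, b). (a \<cdot> \<theta>, b \<cdot> \<theta>)) E"
  have "vars_eqs E' \<subseteq> vars_eqs ((Var x, c) # E) - {x}"
    using assms by (auto simp: E'_def \<theta>_def vars_eqs_def vars_subst split: if_splits)
  moreover have "x \<in> vars_eqs ((Var x, c) # E)" by (simp add: vars_eqs_def)
  ultimately have "card (vars_eqs E') < card (vars_eqs ((Var x, c) # E))"
    by (metis card_Diff1_less card_mono finite_Diff finite_vars_eqs le_less_trans)
  then show ?thesis by (simp add: E'_def \<theta>_def)
qed

lemma mgu_eqs_exists:
  fixes E :: "('f, 'v) eqs"
  assumes "unifies \<tau> E"
  shows "\<exists>\<sigma>. is_mgu_eqs \<sigma> E"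
  using assms
proof (induction E arbitrary: \<tau> rule: wf_induct[OF wf_measures[of "[\<lambda>E. card (vars_eqs E), size_eqs]"]])
  case (1 E)
  note IH = 1(1) and unif = 1(2)
  have smaller: "\<exists>\<sigma>. is_mgu_eqs \<sigma> E'"
    if "vars_eqs E' \<subseteq> vars_eqs E" "size_eqs E' < size_eqs E" "unifies \<tau>' E'"
    for E' :: "('f, 'v) eqs" and \<tau>'
  proof -
    have "card (vars_eqs E') \<le> card (vars_eqs E)" using card_mono[OF finite_vars_eqs that(1)] .
    then have "(E', E) \<in> measures [\<lambda>E. card (vars_eqs E), size_eqs]"
      using that(2) by (cases "card (vars_eqs E') < card (vars_eqs E)") auto
    then show ?thesis using IH that(3) by blast
  qed
  have var_case: "\<exists>\<sigma>. is_mgu_eqs \<sigma> ((Var x, c) # E0)"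
    if neq: "Var x \<noteq> c" and unif_x: "unifies \<tau> ((Var x, c) # E0)"
      and vars: "vars_eqs ((Var x, c) # E0) = vars_eqs E" for x c E0
  proof -
    have nx: "x \<notin> vars_term c" using occurs_check[of x c \<tau>] neq unif_x by (auto simp: unifies_def)
    then obtain \<sigma> where "is_mgu_eqs \<sigma> (map (\<lambda>(a, b). (a \<cdot> Var(x := c), b \<cdot> Var(x := c))) E0)"
      using IH unifies_Var_elim[OF unif_x] card_vars_eqs_Var_elim[OF nx, of E0] vars
      by (auto intro: measures_less)
    then show ?thesis using is_mgu_eqs_Var_elim[OF nx] by blast
  qed
  show ?case
  proof (cases E)
    case Nil
    show ?thesis unfolding is_mgu_eqs_def unifies_def Nil by (intro exI[of _ Var]) auto
  next
    case (Cons e E0)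
    obtain a b where e: "e = (a, b)" by (cases e)
    have ab: "a \<cdot> \<tau> = b \<cdot> \<tau>" using unif Cons e unfolding unifies_def by auto
    consider (trivial) "a = b" | (var_left) x where "a = Var x" "a \<noteq> b"
      | (var_right) x where "b = Var x" "a \<noteq> b" | (decompose) f as g bs where "a = Fun f as" "b = Fun g bs"
      by (cases a; cases b) auto
    then show ?thesis
    proof cases
      case trivial
      then obtain \<sigma> where "is_mgu_eqs \<sigma> E0"
        using smaller[of E0 \<tau>] unif Cons e by (auto simp: vars_eqs_def size_eqs_def unifies_def)
      then show ?thesis using trivial Cons e unfolding is_mgu_eqs_def unifies_def by auto
    next
      case (var_left x)
      then show ?thesis using var_case[of x b E0] unif Cons e by auto
    next
      case (var_right x)
      have "vars_eqs ((Var x, a) # E0) = vars_eqs E" using Cons e var_right by (auto simp: vars_eqs_def)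
      then show ?thesis
        using var_case[of x a E0] unif Cons e var_right unifies_Cons_swap
        unfolding is_mgu_eqs_def by (metis (no_types, lifting))
    next
      case (decompose f as g bs)
      then have fg: "f = g" and len: "length as = length bs"
        using ab by (auto dest: map_eq_imp_length_eq)
      have "vars_eqs (zip as bs @ E0) \<subseteq> vars_eqs E" "size_eqs (zip as bs @ E0) < size_eqs E"
        unfolding Cons e decompose using vars_eqs_decompose size_eqs_decompose[OF len] by simp_all
      moreover have u: "unifies \<tau>' (zip as bs @ E0) \<longleftrightarrow> unifies \<tau>' E" for \<tau>'
        using unifies_decompose[OF len] unfolding Cons e decompose fg by blast
      ultimately obtain \<sigma> where "is_mgu_eqs \<sigma> (zip as bs @ E0)" using smaller unif by blast
      then show ?thesis using u unfolding is_mgu_eqs_def by auto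
    qed
  qed
qed

lemma mgu_exists: "s \<cdot> \<tau> = t \<cdot> \<tau> \<Longrightarrow> \<exists>\<sigma>. is_mgu \<sigma> s t"
  using mgu_eqs_exists[of \<tau> "[(s, t)]"] unfolding is_mgu_eqs_def is_mgu_def unifies_def by auto

section \<open>Critical pairs\<close>

lemma rename_apart:
  assumes inf: "infinite (UNIV :: 'v set)" and fin: "finite (V1 :: 'v set)" "finite (V2 :: 'v set)"
  obtains \<pi> where "bij \<pi>" "\<pi> ` V1 \<inter> V2 = {}"
proof -
  have "infinite (UNIV - (V1 \<union> V2))" using inf fin by auto
  then obtain F where F: "F \<subseteq> UNIV - (V1 \<union> V2)" "finite F" "card F = card V1"
    using infinite_arbitrarily_large by blast
  obtain g where g: "bij_betw g V1 F" using finite_same_card_bij[OF fin(1) F(2)] F(3) by auto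
  define \<pi> where "\<pi> x = (if x \<in> V1 then g x else if x \<in> F then inv_into V1 g x else x)" for x
  have "\<pi> (\<pi> x) = x" for x
  proof (cases "x \<in> V1")
    case True
    then have "g x \<in> F" "g x \<notin> V1" using g F by (auto simp: bij_betw_def)
    then show ?thesis using True g by (simp add: \<pi>_def bij_betw_def)
  next
    case False
    show ?thesis
    proof (cases "x \<in> F")
      case True
      have "inv_into V1 g x \<in> V1" using True g by (metis bij_betw_def inv_into_into)
      moreover have "g (inv_into V1 g x) = x" using True g by (meson bij_betw_inv_into_right)
      ultimately show ?thesis using False True by (simp add: \<pi>_def)
    qed (use False in \<open>simp add: \<pi>_def\<close>)
  qed
  then have "\<pi> \<circ> \<pi> = id" by auto
  then have "bij \<pi>" using o_bij by blast
  moreover have "\<pi> ` V1 \<subseteq> F" using g unfolding \<pi>_def bij_betw_def by auto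
  ultimately show thesis using that F(1) by blast
qed

lemma finite_vars_rule: "finite (vars_rule lr)"
  unfolding vars_rule_def by simp

lemma variant_apart:
  fixes l1 r1 l2 r2 :: "('f, 'v) term"
  assumes "infinite (UNIV :: 'v set)"
  obtains l1' r1' \<tau> where "is_variant (l1, r1) (l1', r1')"
    "vars_rule (l1', r1') \<inter> vars_rule (l2, r2) = {}"
    "l1' \<cdot> \<tau> = l1 \<cdot> \<sigma>1" "r1' \<cdot> \<tau> = r1 \<cdot> \<sigma>1" "l2 \<cdot> \<tau> = l2 \<cdot> \<sigma>2" "r2 \<cdot> \<tau> = r2 \<cdot> \<sigma>2"
proof -
  obtain \<pi> :: "'v \<Rightarrow> 'v" where \<pi>: "bij \<pi>" "\<pi> ` vars_rule (l1, r1) \<inter> vars_rule (l2, r2) = {}"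
    using rename_apart[OF assms finite_vars_rule finite_vars_rule] by blast
  define l1' where "l1' = l1 \<cdot> (Var \<circ> \<pi>)"
  define r1' where "r1' = r1 \<cdot> (Var \<circ> \<pi>)"
  define \<tau> where "\<tau> x = (if x \<in> vars_rule (l1', r1') then \<sigma>1 (inv \<pi> x) else \<sigma>2 x)" for x
  have vars': "vars_rule (l1', r1') = \<pi> ` vars_rule (l1, r1)"
    unfolding vars_rule_def l1'_def r1'_def by (simp add: vars_rename image_Un)
  have renamed: "t \<cdot> (Var \<circ> \<pi>) \<cdot> \<tau> = t \<cdot> \<sigma>1" if "vars_term t \<subseteq> vars_rule (l1, r1)" for t
    unfolding subst_subst using that \<pi>(1) by (intro subst_cong) (auto simp: \<tau>_def vars' bij_is_inj)
  have "is_variant (l1, r1) (l1', r1')" unfolding is_variant_def l1'_def r1'_def using \<pi>(1) by auto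
  moreover have disj: "vars_rule (l1', r1') \<inter> vars_rule (l2, r2) = {}" using vars' \<pi>(2) by simp
  moreover have "l1' \<cdot> \<tau> = l1 \<cdot> \<sigma>1" "r1' \<cdot> \<tau> = r1 \<cdot> \<sigma>1"
    unfolding l1'_def r1'_def by (auto intro!: renamed simp: vars_rule_def)
  moreover have "l2 \<cdot> \<tau> = l2 \<cdot> \<sigma>2" "r2 \<cdot> \<tau> = r2 \<cdot> \<sigma>2"
    using disj by (auto intro!: subst_cong simp: \<tau>_def vars_rule_def)
  ultimately show thesis using that by blast
qed

lemma is_variant_refl: "is_variant lr lr"
  unfolding is_variant_def by (intro exI[of _ id]) auto

lemma pcpI:
  "variant_of (l1, r1) R1 \<Longrightarrow> variant_of (l2, r2) R2 \<Longrightarrow> vars_rule (l1, r1) \<inter> vars_rule (l2, r2) = {} \<Longrightarrow>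
    p \<in> fun_poss l2 \<Longrightarrow> (p = [] \<longrightarrow> \<not> is_variant (l1, r1) (l2, r2)) \<Longrightarrow> is_mgu \<sigma> l1 (subt_at l2 p) \<Longrightarrow>
    prime_redex S (subt_at (l2 \<cdot> \<sigma>) p) \<Longrightarrow> (replace_at (l2 \<cdot> \<sigma>) p (r1 \<cdot> \<sigma>), r2 \<cdot> \<sigma>) \<in> pcp R1 R2 S"
  unfolding pcp_def by blast

lemma subst_rhs_determined:
  assumes "vars_term r \<subseteq> vars_term l" "l \<cdot> \<sigma> = l \<cdot> \<tau>"
  shows "r \<cdot> \<sigma> = r \<cdot> \<tau>"
  using assms by (intro subst_cong) (auto dest: subst_eq_vars)

lemma prime_redex_subst: "prime_redex S (w \<cdot> \<delta>) \<Longrightarrow> prime_redex S w"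
  unfolding prime_redex_def using poss_subst subt_at_subst rstep_NF_subst by fastforce

lemma overlap_instance_of_pcp:
  fixes l1 r1 l2 r2 :: "('f, 'v) term"
  assumes inf: "infinite (UNIV :: 'v set)"
    and vars_X1: "\<forall>(l, r) \<in> X1. vars_term r \<subseteq> vars_term l"
    and rule1: "(l1, r1) \<in> X1" and rule2: "(l2, r2) \<in> X2"
    and q: "q \<in> fun_poss l2"
    and overlap: "subt_at (l2 \<cdot> \<sigma>2) q = l1 \<cdot> \<sigma>1"
    and prime: "prime_redex S (l1 \<cdot> \<sigma>1)"
  shows "replace_at (l2 \<cdot> \<sigma>2) q (r1 \<cdot> \<sigma>1) = r2 \<cdot> \<sigma>2 \<or>
    (\<exists>c1 c2 \<delta>. (c1, c2) \<in> pcp X1 X2 S \<and>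
       replace_at (l2 \<cdot> \<sigma>2) q (r1 \<cdot> \<sigma>1) = c1 \<cdot> \<delta> \<and> r2 \<cdot> \<sigma>2 = c2 \<cdot> \<delta>)"
proof -
  obtain l1' r1' \<tau> where variant: "is_variant (l1, r1) (l1', r1')"
    and disj: "vars_rule (l1', r1') \<inter> vars_rule (l2, r2) = {}"
    and inst: "l1' \<cdot> \<tau> = l1 \<cdot> \<sigma>1" "r1' \<cdot> \<tau> = r1 \<cdot> \<sigma>1" "l2 \<cdot> \<tau> = l2 \<cdot> \<sigma>2" "r2 \<cdot> \<tau> = r2 \<cdot> \<sigma>2"
    using variant_apart[OF inf] by blast
  have qp: "q \<in> poss l2" using q unfolding fun_poss_def by auto
  have "l1' \<cdot> \<tau> = subt_at l2 q \<cdot> \<tau>"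
    using inst overlap subt_at_subst[OF qp, of \<tau>] by simp
  moreover obtain \<sigma> where mgu: "is_mgu \<sigma> l1' (subt_at l2 q)" using mgu_exists calculation by blast
  ultimately obtain \<delta> where \<delta>: "\<forall>x. \<tau> x = \<sigma> x \<cdot> \<delta>" unfolding is_mgu_def by blast
  have \<tau>\<delta>: "t \<cdot> \<tau> = t \<cdot> \<sigma> \<cdot> \<delta>" for t
    unfolding subst_subst using \<delta> by (intro subst_cong) auto
  show ?thesis
  proof (cases "q = [] \<and> is_variant (l1', r1') (l2, r2)")
    case True
    then obtain \<rho> where \<rho>: "l2 = l1' \<cdot> (Var \<circ> \<rho>)" "r2 = r1' \<cdot> (Var \<circ> \<rho>)"
      unfolding is_variant_def by auto
    have "vars_term r1' \<subseteq> vars_term l1'"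
      using variant vars_X1 rule1 unfolding is_variant_def by (fastforce simp: vars_rename)
    moreover have "l1' \<cdot> \<tau> = l1' \<cdot> (\<lambda>x. \<sigma>2 (\<rho> x))"
      using inst overlap True \<rho>(1) by (simp add: subst_subst)
    ultimately have "r1' \<cdot> \<tau> = r1' \<cdot> (\<lambda>x. \<sigma>2 (\<rho> x))" by (rule subst_rhs_determined)
    then show ?thesis using inst True \<rho>(2) by (simp add: subst_subst)
  next
    case False
    have qp\<sigma>: "q \<in> poss (l2 \<cdot> \<sigma>)" using poss_subst[OF qp] .
    have "subt_at (l2 \<cdot> \<sigma>) q \<cdot> \<delta> = l1 \<cdot> \<sigma>1"
      using subt_at_subst[OF qp\<sigma>] \<tau>\<delta>[of l2] inst overlap by simp
    then have "prime_redex S (subt_at (l2 \<cdot> \<sigma>) q)" using prime prime_redex_subst by metis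
    moreover have "variant_of (l1', r1') X1" "variant_of (l2, r2) X2"
      using variant rule1 rule2 is_variant_refl unfolding variant_of_def by blast+
    ultimately have "(replace_at (l2 \<cdot> \<sigma>) q (r1' \<cdot> \<sigma>), r2 \<cdot> \<sigma>) \<in> pcp X1 X2 S"
      using disj q False mgu by (intro pcpI) auto
    moreover have "replace_at (l2 \<cdot> \<sigma>2) q (r1 \<cdot> \<sigma>1) = replace_at (l2 \<cdot> \<sigma>) q (r1' \<cdot> \<sigma>) \<cdot> \<delta>"
      using replace_at_subst[OF qp\<sigma>] \<tau>\<delta>[of l2] \<tau>\<delta>[of r1'] inst by simp
    moreover have "r2 \<cdot> \<sigma>2 = r2 \<cdot> \<sigma> \<cdot> \<delta>" using \<tau>\<delta>[of r2] inst by simp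
    ultimately show ?thesis by blast
  qed
qed

lemma rtrancl_Restr_mono: "P \<subseteq> Q \<Longrightarrow> X \<subseteq> Y \<Longrightarrow> (Restr X P)\<^sup>* \<subseteq> (Restr Y Q)\<^sup>*"
  by (rule rtrancl_mono) blast

lemma rtrancl_Restr_map:
  assumes "(x, y) \<in> (Restr X P)\<^sup>*"
    and "\<And>a b. (a, b) \<in> X \<Longrightarrow> (f a, f b) \<in> Y" and "\<And>a. a \<in> P \<Longrightarrow> f a \<in> Q"
  shows "(f x, f y) \<in> (Restr Y Q)\<^sup>*"
  using assms(1) by (induction rule: rtrancl_induct) (auto intro: rtrancl_into_rtrancl assms(2,3))

lemma rtrancl_Restr_converse: "(x, y) \<in> (Restr X P)\<^sup>* \<Longrightarrow> (y, x) \<in> (Restr (X\<inverse>) P)\<^sup>*"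
proof -
  assume "(x, y) \<in> (Restr X P)\<^sup>*"
  then have "(y, x) \<in> ((Restr X P)\<inverse>)\<^sup>*" by (simp add: rtrancl_converse)
  moreover have "(Restr X P)\<inverse> = Restr (X\<inverse>) P" by auto
  ultimately show ?thesis by simp
qed

lemma rtrancl_Restr_reachable: "(x, y) \<in> X\<^sup>* \<Longrightarrow> (x, y) \<in> (Restr X {w. (x, w) \<in> X\<^sup>*})\<^sup>*"
proof (induction rule: rtrancl_induct)
  case (step y z)
  then have "(y, z) \<in> Restr X {w. (x, w) \<in> X\<^sup>*}" by auto
  with step.IH show ?case by (rule rtrancl_into_rtrancl)
qed simp

lemma rtrancl_Restr_insert_exit:
  assumes "(v, t) \<in> (Restr S (insert v A))\<^sup>*" "t \<in> A" "v \<notin> A"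
  obtains c where "c \<in> A" "(v, c) \<in> S" "(c, t) \<in> (Restr S A)\<^sup>*"
proof -
  have "x \<in> A \<and> (x, t) \<in> (Restr S A)\<^sup>* \<or> (\<exists>c \<in> A. (v, c) \<in> S \<and> (c, t) \<in> (Restr S A)\<^sup>*)"
    if "(x, t) \<in> (Restr S (insert v A))\<^sup>*" for x
    using that
  proof (induction rule: converse_rtrancl_induct)
    case (step x y)
    then show ?case by (auto intro: converse_rtrancl_into_rtrancl)
  qed (use assms(2) in simp)
  then show thesis using assms that by blast
qed

section \<open>Reduction orders compatible with \<open>B\<close>\<close>

locale compatible_order =
  fixes gt B :: "('f, 'v) trs"
  assumes order: "B_compatible_reduction_order B gt"
begin

abbreviation sim :: "('f, 'v) trs" where "sim \<equiv> simB B"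

lemma gt_trans: "(s, t) \<in> gt \<Longrightarrow> (t, u) \<in> gt \<Longrightarrow> (s, u) \<in> gt"
  using order unfolding B_compatible_reduction_order_def trans_def by blast

lemma gt_irrefl: "(s, s) \<notin> gt"
  using order unfolding B_compatible_reduction_order_def irrefl_def by blast

lemma wf_converse_gt: "wf (gt\<inverse>)"
  using order unfolding B_compatible_reduction_order_def by blast

lemma gt_subst: "(s, t) \<in> gt \<Longrightarrow> (s \<cdot> \<sigma>, t \<cdot> \<sigma>) \<in> gt"
  using order unfolding B_compatible_reduction_order_def by blast

lemma gt_ctxt: "(s, t) \<in> gt \<Longrightarrow> (ctxt_apply C s, ctxt_apply C t) \<in> gt"
  using order unfolding B_compatible_reduction_order_def by blast

lemma gt_replace_at: "(s, t) \<in> gt \<Longrightarrow> p \<in> poss u \<Longrightarrow> (replace_at u p s, replace_at u p t) \<in> gt"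
  using replace_at_eq_ctxt_apply[of p u] gt_ctxt by metis

lemma sim_gt_sim: "(s, s') \<in> sim \<Longrightarrow> (s', t') \<in> gt \<Longrightarrow> (t', t) \<in> sim \<Longrightarrow> (s, t) \<in> gt"
  using order unfolding B_compatible_reduction_order_def by blast

lemma sim_refl [simp]: "(s, s) \<in> sim"
  unfolding simB_def conv_def by simp

lemma sim_sym: "(s, t) \<in> sim \<Longrightarrow> (t, s) \<in> sim"
  unfolding simB_def by (rule conv_sym)

lemma sim_trans: "(s, t) \<in> sim \<Longrightarrow> (t, u) \<in> sim \<Longrightarrow> (s, u) \<in> sim"
  unfolding simB_def by (rule conv_trans)

lemma sim_gt: "(s, s') \<in> sim \<Longrightarrow> (s', t) \<in> gt \<Longrightarrow> (s, t) \<in> gt"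
  using sim_gt_sim[of s s' t t] by simp

lemma gt_sim: "(s, t') \<in> gt \<Longrightarrow> (t', t) \<in> sim \<Longrightarrow> (s, t) \<in> gt"
  using sim_gt_sim[of s s t' t] by simp

lemma gt_not_sim: "(s, t) \<in> gt \<Longrightarrow> (s, t) \<notin> sim"
  using gt_sim[of s t s] gt_irrefl sim_sym by blast

lemma sim_replace_at: "(s, t) \<in> sim \<Longrightarrow> p \<in> poss u \<Longrightarrow> (replace_at u p s, replace_at u p t) \<in> sim"
  unfolding simB_def by (rule conv_replace_at)

lemma sim_subst: "(s, t) \<in> sim \<Longrightarrow> (s \<cdot> \<sigma>, t \<cdot> \<sigma>) \<in> sim"
  unfolding simB_def by (rule conv_subst)

lemma rsteps_Bpm_sim: "(s, t) \<in> (rstep (Bpm B))\<^sup>* \<Longrightarrow> (s, t) \<in> sim"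
  unfolding simB_def conv_def sym_step_Bpm .

lemma rstep_Bpm_sim: "(s, t) \<in> rstep (Bpm B) \<Longrightarrow> (s, t) \<in> sim"
  using rsteps_Bpm_sim by blast

lemma rstep_gt: "R \<subseteq> gt \<Longrightarrow> (s, t) \<in> rstep R \<Longrightarrow> (s, t) \<in> gt"
  by (erule rstepE) (metis gt_replace_at gt_subst replace_at_subt_at subsetD)

text \<open>Otherwise instantiating the extra variable by the left-hand side itself would yield an
  infinite descending chain \<open>s > C[s] > C[C[s]] > \<dots>\<close>.\<close>
lemma gt_vars: assumes "(s, t) \<in> gt" shows "vars_term t \<subseteq> vars_term s"
proof
  fix x assume x: "x \<in> vars_term t"
  show "x \<in> vars_term s"
  proof (rule ccontr)
    assume nx: "x \<notin> vars_term s"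
    define \<sigma> where "\<sigma> = Var(x := s)"
    obtain q where q: "q \<in> poss t" "subt_at t q = Var x" using x unfolding vars_term_poss by blast
    obtain C where C: "\<forall>w. replace_at (t \<cdot> \<sigma>) q w = ctxt_apply C w"
      using replace_at_eq_ctxt_apply[OF poss_subst[OF q(1)]] by auto
    have "subt_at (t \<cdot> \<sigma>) q = s" using q by (simp add: subt_at_subst \<sigma>_def)
    then have "t \<cdot> \<sigma> = ctxt_apply C s" using C replace_at_subt_at by metis
    then have step: "(s, ctxt_apply C s) \<in> gt"
      using gt_subst[OF assms, of \<sigma>] nx by (simp add: \<sigma>_def subst_fun_upd_notin)
    define g where "g k = (ctxt_apply C ^^ k) s" for k
    have "(g k, g (Suc k)) \<in> gt" for k
      unfolding g_def by (induction k) (auto simp: step intro: gt_ctxt)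
    then show False using wf_converse_gt unfolding wf_iff_no_infinite_down_chain by blast
  qed
qed

lemma SN_mod_if_subset_gt: "R \<subseteq> gt \<Longrightarrow> SN_mod B R"
proof -
  assume "R \<subseteq> gt"
  then have "relstep B R \<subseteq> gt" unfolding relstep_def using sim_gt_sim rstep_gt by blast
  then show ?thesis unfolding SN_mod_def using wf_converse_gt
    unfolding wf_iff_no_infinite_down_chain by blast
qed

text \<open>Unlike joinability modulo \<open>B\<close>, bounded convertibility survives tracing a run backwards.\<close>
definition bounded_by :: "('f, 'v) term \<Rightarrow> ('f, 'v) term \<Rightarrow> ('f, 'v) term set" where
  "bounded_by s t = {w. w = s \<or> w = t \<or> (s, w) \<in> gt \<or> (t, w) \<in> gt \<or> ((w, s) \<in> sim \<and> (w, t) \<in> sim)}"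

definition bounded_conv :: "('f, 'v) trs \<Rightarrow> ('f, 'v) term \<Rightarrow> ('f, 'v) term \<Rightarrow> bool" where
  "bounded_conv R s t \<longleftrightarrow> (s, t) \<in> (Restr (sym_step (R \<union> B)) (bounded_by s t))\<^sup>*"

lemma bounded_by_commute: "bounded_by s t = bounded_by t s"
  unfolding bounded_by_def by auto

lemma bounded_by_subset_gt: assumes "(s, u) \<in> gt \<or> (t, u) \<in> gt" shows "bounded_by s u \<subseteq> bounded_by s t"
  using assms gt_trans gt_sim sim_sym unfolding bounded_by_def by blast

lemma bounded_conv_refl [simp]: "bounded_conv R s s"
  unfolding bounded_conv_def by simp

lemma bounded_conv_sym: "bounded_conv R s t \<Longrightarrow> bounded_conv R t s"
  unfolding bounded_conv_def using rtrancl_Restr_converse[of s t "sym_step (R \<union> B)" "bounded_by s t"]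
  by (simp add: bounded_by_commute)

lemma bounded_conv_imp_conv: "bounded_conv R s t \<Longrightarrow> (s, t) \<in> conv (R \<union> B)"
  unfolding bounded_conv_def conv_def by (erule rtrancl_mono[THEN subsetD, rotated]) auto

lemma bounded_conv_if_sim: assumes "(s, t) \<in> sim" shows "bounded_conv R s t"
proof -
  have "(s, t) \<in> (Restr (sym_step B) {w. (s, w) \<in> (sym_step B)\<^sup>*})\<^sup>*"
    using assms unfolding simB_def conv_def by (rule rtrancl_Restr_reachable)
  moreover have "{w. (s, w) \<in> (sym_step B)\<^sup>*} \<subseteq> bounded_by s t"
    using assms sim_sym sim_trans unfolding bounded_by_def simB_def conv_def by blast
  moreover have "sym_step B \<subseteq> sym_step (R \<union> B)" unfolding sym_step_def rstep_union by auto
  ultimately show ?thesis unfolding bounded_conv_def using rtrancl_Restr_mono by blast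
qed

lemma bounded_conv_trans:
  assumes "bounded_conv R s u" "bounded_conv R u t" "(s, u) \<in> gt \<or> (t, u) \<in> gt"
  shows "bounded_conv R s t"
proof -
  have "bounded_by s u \<subseteq> bounded_by s t" "bounded_by u t \<subseteq> bounded_by s t"
    using bounded_by_subset_gt[OF assms(3)] bounded_by_subset_gt[of t u s] assms(3)
    by (auto simp: bounded_by_commute)
  then have "(s, u) \<in> (Restr (sym_step (R \<union> B)) (bounded_by s t))\<^sup>*"
    and "(u, t) \<in> (Restr (sym_step (R \<union> B)) (bounded_by s t))\<^sup>*"
    using assms(1,2) rtrancl_Restr_mono[OF _ order_refl] unfolding bounded_conv_def by blast+
  then show ?thesis unfolding bounded_conv_def by simp
qed

lemma bounded_conv_rstep_left:
  assumes "R \<subseteq> gt" "(s, s') \<in> rstep R" "bounded_conv R s' t"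
  shows "bounded_conv R s t"
proof -
  have "(s, s') \<in> gt" using rstep_gt assms by blast
  moreover have "bounded_conv R s s'"
    using assms(2) unfolding bounded_conv_def bounded_by_def sym_step_def rstep_union by auto
  ultimately show ?thesis using bounded_conv_trans assms(3) by blast
qed

lemma bounded_conv_if_join_mod:
  assumes "R \<subseteq> gt" "(s, t) \<in> join_mod B R"
  shows "bounded_conv R s t"
proof -
  obtain a b where sa: "(s, a) \<in> (rstep R)\<^sup>*" and ab: "(a, b) \<in> sim" and tb: "(t, b) \<in> (rstep R)\<^sup>*"
    using assms(2) unfolding join_mod_def by (auto simp: rtrancl_converse)
  from tb have "bounded_conv R a t"
  proof (induction rule: converse_rtrancl_induct)
    case (step y z)
    then show ?case
      using bounded_conv_rstep_left[OF assms(1) step(1) bounded_conv_sym] bounded_conv_sym by blast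
  qed (rule bounded_conv_if_sim[OF ab])
  with sa show ?thesis
    by (induction rule: converse_rtrancl_induct) (auto intro: bounded_conv_rstep_left[OF assms(1)])
qed

lemma bounded_conv_replace_at:
  assumes "bounded_conv R s t" "p \<in> poss u"
  shows "bounded_conv R (replace_at u p s) (replace_at u p t)"
  unfolding bounded_conv_def
  by (rule rtrancl_Restr_map[OF assms(1)[unfolded bounded_conv_def]])
    (use assms(2) sym_step_replace_at gt_replace_at sim_replace_at in \<open>auto simp: bounded_by_def\<close>)

lemma bounded_conv_subst:
  assumes "bounded_conv R s t"
  shows "bounded_conv R (s \<cdot> \<sigma>) (t \<cdot> \<sigma>)"
  unfolding bounded_conv_def
  by (rule rtrancl_Restr_map[OF assms(1)[unfolded bounded_conv_def]])
    (use sym_step_subst gt_subst sim_subst in \<open>auto simp: bounded_by_def\<close>)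

lemma bounded_conv_rstep:
  assumes "\<forall>(l, r) \<in> X. bounded_conv R l r" "(s, t) \<in> rstep X"
  shows "bounded_conv R s t"
  using assms(2)
proof (cases rule: rstepE)
  case (1 l r p \<sigma>)
  have "bounded_conv R (l \<cdot> \<sigma>) (r \<cdot> \<sigma>)" using assms(1) 1(1) by (blast intro: bounded_conv_subst)
  from bounded_conv_replace_at[OF this 1(2)] show ?thesis using 1(3,4) by (metis replace_at_subt_at)
qed

lemma bounded_conv_sym_step:
  "\<forall>(l, r) \<in> X. bounded_conv R l r \<Longrightarrow> (s, t) \<in> sym_step X \<Longrightarrow> bounded_conv R s t"
  using bounded_conv_rstep bounded_conv_sym unfolding sym_step_def by blast

lemma bounded_conv_rstep_trans:
  assumes "X \<subseteq> gt" "\<forall>(l, r) \<in> X. bounded_conv R l r" "(s, u) \<in> rstep X" "bounded_conv R u t"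
  shows "bounded_conv R s t"
  using bounded_conv_trans[OF bounded_conv_rstep[OF assms(2,3)] assms(4)] rstep_gt[OF assms(1,3)] by blast

definition below :: "('f, 'v) term \<Rightarrow> ('f, 'v) term set" where
  "below u = {w. (u, w) \<in> gt}"

definition conv_below :: "('f, 'v) trs \<Rightarrow> ('f, 'v) term \<Rightarrow> ('f, 'v) trs" where
  "conv_below R u = (Restr (sym_step (R \<union> B)) (below u))\<^sup>*"

lemma conv_below_sym: "(s, t) \<in> conv_below R u \<Longrightarrow> (t, s) \<in> conv_below R u"
  unfolding conv_below_def using rtrancl_Restr_converse converse_sym_step by metis

lemma conv_below_trans: "(s, t) \<in> conv_below R u \<Longrightarrow> (t, v) \<in> conv_below R u \<Longrightarrow> (s, v) \<in> conv_below R u"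
  unfolding conv_below_def by simp

lemma below_sim: "(u, v) \<in> sim \<Longrightarrow> below v = below u"
  unfolding below_def using sim_gt sim_sym by blast

lemma conv_below_sim: "(u, v) \<in> sim \<Longrightarrow> conv_below R v = conv_below R u"
  unfolding conv_below_def using below_sim by simp

lemma conv_below_if_bounded_conv:
  assumes "bounded_conv R s t" "(u, s) \<in> gt" "(u, t) \<in> gt"
  shows "(s, t) \<in> conv_below R u"
proof -
  have "bounded_by s t \<subseteq> below u"
    unfolding bounded_by_def below_def using assms(2,3) gt_trans gt_sim sim_sym by blast
  then show ?thesis
    using assms(1) rtrancl_Restr_mono unfolding bounded_conv_def conv_below_def by blast
qed

lemma conv_below_if_join_mod:
  "R \<subseteq> gt \<Longrightarrow> (s, t) \<in> join_mod B R \<Longrightarrow> (u, s) \<in> gt \<Longrightarrow> (u, t) \<in> gt \<Longrightarrow> (s, t) \<in> conv_below R u"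
  using conv_below_if_bounded_conv bounded_conv_if_join_mod by blast

text \<open>All terms of the conversion are \<open>v\<close> or below \<open>u\<close>, and the last step leaving \<open>v\<close> can be
  neither a \<open>B\<close>-step nor an inverted \<open>R\<close>-step.\<close>
lemma bounded_conv_exit_step:
  assumes conv: "bounded_conv R v t" and uv: "(u, v) \<in> sim" and ut: "(u, t) \<in> gt" and R: "R \<subseteq> gt"
  shows "\<exists>c. (v, c) \<in> rstep R \<and> (c, t) \<in> conv_below R u"
proof -
  have v: "v \<notin> below u" using uv gt_not_sim sim_sym sim_gt gt_irrefl unfolding below_def by blast
  have "bounded_by v t \<subseteq> insert v (below u)"
  proof
    fix w assume "w \<in> bounded_by v t"
    then consider "w = v" | "w = t" | "(v, w) \<in> gt" | "(t, w) \<in> gt" | "(w, v) \<in> sim" "(w, t) \<in> sim"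
      unfolding bounded_by_def by blast
    then show "w \<in> insert v (below u)"
    proof cases
      case 5
      then have "(u, t) \<in> sim" using uv sim_trans sim_sym by blast
      then show ?thesis using ut gt_not_sim by blast
    qed (use ut uv gt_trans sim_gt in \<open>auto simp: below_def\<close>)
  qed
  then have "(v, t) \<in> (Restr (sym_step (R \<union> B)) (insert v (below u)))\<^sup>*"
    using conv rtrancl_Restr_mono unfolding bounded_conv_def by blast
  then obtain c where c: "c \<in> below u" "(v, c) \<in> sym_step (R \<union> B)" and ct: "(c, t) \<in> conv_below R u"
    using rtrancl_Restr_insert_exit[OF _ _ v] ut unfolding conv_below_def below_def by blast
  have "(c, v) \<notin> rstep R" using rstep_gt[OF R] c(1) v gt_trans unfolding below_def by blast
  moreover have "(v, c) \<notin> sim" using c(1) uv sim_trans gt_not_sim unfolding below_def by blast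
  then have "(v, c) \<notin> sym_step B" unfolding simB_def conv_def by blast
  ultimately have "(v, c) \<in> rstep R" using c(2) unfolding sym_step_def rstep_union by blast
  with ct show ?thesis by blast
qed

end

section \<open>Local peaks\<close>

lemma size_subt_at_append_le: "p @ q \<in> poss t \<Longrightarrow> size (subt_at t (p @ q)) \<le> size (subt_at t p)"
  using size_subt_at[of q "subt_at t p"] by auto

lemma size_subt_at_append_less:
  "p @ q \<in> poss t \<Longrightarrow> q \<noteq> [] \<Longrightarrow> size (subt_at t (p @ q)) < size (subt_at t p)"
  using size_subt_at[of q "subt_at t p"] by auto

lemma join_modI:
  "(s, c) \<in> (rstep R)\<^sup>* \<Longrightarrow> (c, d) \<in> simB B \<Longrightarrow> (t, d) \<in> (rstep R)\<^sup>* \<Longrightarrow> (s, t) \<in> join_mod B R"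
  unfolding join_mod_def by (auto simp: rtrancl_converse)

lemma rsteps_subst_fun_upd_trancl:
  assumes "(\<sigma> x, s) \<in> rstep R" "x \<in> vars_term t" "\<sigma> x \<noteq> s"
  shows "(t \<cdot> \<sigma>, t \<cdot> \<sigma>(x := s)) \<in> (rstep R)\<^sup>+"
proof -
  have "t \<cdot> \<sigma> \<noteq> t \<cdot> \<sigma>(x := s)" using subst_eq_vars[of t \<sigma> "\<sigma>(x := s)" x] assms(2,3) by auto
  then show ?thesis using rtranclD[OF rsteps_subst_fun_upd[where \<sigma> = \<sigma> and x = x, OF assms(1)]] by blast
qed

lemma parallel_peak:
  assumes "(u, t) \<in> rstep_at X1 (r @ i # p)" "(u, v) \<in> rstep_at X2 (r @ j # q)" "i \<noteq> j"
  shows "\<exists>c. (t, c) \<in> rstep X2 \<and> (v, c) \<in> rstep X1"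
proof -
  obtain l1 r1 \<sigma>1 where 1: "(l1, r1) \<in> X1" "r @ i # p \<in> poss u" "subt_at u (r @ i # p) = l1 \<cdot> \<sigma>1"
    "t = replace_at u (r @ i # p) (r1 \<cdot> \<sigma>1)"
    using assms(1) by (rule rstep_atE)
  obtain l2 r2 \<sigma>2 where 2: "(l2, r2) \<in> X2" "r @ j # q \<in> poss u" "subt_at u (r @ j # q) = l2 \<cdot> \<sigma>2"
    "v = replace_at u (r @ j # q) (r2 \<cdot> \<sigma>2)"
    using assms(2) by (rule rstep_atE)
  let ?c = "replace_at t (r @ j # q) (r2 \<cdot> \<sigma>2)"
  have "r @ j # q \<in> poss t" "subt_at t (r @ j # q) = l2 \<cdot> \<sigma>2"
    using 1(4) 2(2,3) poss_replace_at_parallel[OF assms(3) 1(2)]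
      subt_at_replace_at_parallel[OF assms(3) 1(2)] by simp_all
  then have "(t, ?c) \<in> rstep X2" using 2(1) by (intro rstepI) auto
  moreover have "r @ i # p \<in> poss v" "subt_at v (r @ i # p) = l1 \<cdot> \<sigma>1"
    using 2(4) 1(2,3) poss_replace_at_parallel[OF assms(3)[symmetric] 2(2)]
      subt_at_replace_at_parallel[OF assms(3)[symmetric] 2(2)] by simp_all
  moreover have "?c = replace_at v (r @ i # p) (r1 \<cdot> \<sigma>1)"
    using replace_at_parallel_commute[OF assms(3) 1(2) 2(2)] 1(4) 2(4) by simp
  ultimately show ?thesis using 1(1) rstepI by blast
qed

lemma variable_overlap:
  assumes "p1 @ q1 @ q2 \<in> poss u" "subt_at u p1 = l1 \<cdot> \<sigma>1" "q1 \<in> poss l1" "subt_at l1 q1 = Var x"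
    "(u, v) \<in> rstep_at X (p1 @ q1 @ q2)"
  obtains s where "(\<sigma>1 x, s) \<in> rstep X" "v = replace_at u p1 (replace_at (l1 \<cdot> \<sigma>1) q1 s)"
proof -
  obtain l2 r2 \<sigma>2 where 2: "(l2, r2) \<in> X" "subt_at u (p1 @ q1 @ q2) = l2 \<cdot> \<sigma>2"
    "v = replace_at u (p1 @ q1 @ q2) (r2 \<cdot> \<sigma>2)"
    using assms(5) by (rule rstep_atE)
  have p1: "p1 \<in> poss u" and q1: "q1 \<in> poss (l1 \<cdot> \<sigma>1)" using assms(1,2) by auto
  have sx: "subt_at (l1 \<cdot> \<sigma>1) q1 = \<sigma>1 x" using subt_at_subst[OF assms(3)] assms(4) by simp
  have q2: "q2 \<in> poss (\<sigma>1 x)" using assms(1,2) sx by simp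
  define s where "s = replace_at (\<sigma>1 x) q2 (r2 \<cdot> \<sigma>2)"
  have "subt_at (\<sigma>1 x) q2 = l2 \<cdot> \<sigma>2" using assms(2) 2(2) sx by simp
  then have "(\<sigma>1 x, s) \<in> rstep X" unfolding s_def using q2 2(1) by (intro rstepI) auto
  moreover have "v = replace_at u p1 (replace_at (l1 \<cdot> \<sigma>1) q1 s)"
    using replace_at_append[OF p1, of "q1 @ q2"] replace_at_append[OF q1, of q2] assms(2) sx 2(3)
    unfolding s_def by simp
  ultimately show thesis using that by blast
qed

lemma non_prime_redex_inner_step:
  assumes "p \<in> poss u" "\<not> prime_redex R (subt_at u p)"
  obtains p' t' where "(u, t') \<in> rstep_at R p'" "size (subt_at u p') < size (subt_at u p)"
proof -
  obtain q z where q: "q \<in> poss (subt_at u p)" "q \<noteq> []" "(subt_at (subt_at u p) q, z) \<in> rstep R"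
    using assms(2) unfolding prime_redex_def NF_def by auto
  then obtain l r q' \<sigma> where lr: "(l, r) \<in> R" "q' \<in> poss (subt_at (subt_at u p) q)"
    "subt_at (subt_at (subt_at u p) q) q' = l \<cdot> \<sigma>"
    by (auto elim: rstepE)
  have "p @ q @ q' \<in> poss u" using assms(1) q lr by simp
  moreover have "size (subt_at u (p @ q @ q')) < size (subt_at u p)"
    using size_subt_at_append_less[OF calculation] q(2) by simp
  ultimately show thesis using that lr by (metis rstep_atI append_assoc subt_at_append)
qed

text \<open>The hypotheses of the critical pair lemma modulo \<open>B\<close>, as established for the outcome of a
  fair run.\<close>
locale bounded_critical_pairs = compatible_order gt B for gt B :: "('f, 'v) trs" +
  fixes R :: "('f, 'v) trs"
  assumes vars_infinite: "infinite (UNIV :: 'v set)"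
    and B_vars: "\<forall>(l, r) \<in> B. vars_term l = vars_term r"
    and R_gt: "R \<subseteq> gt"
    and R_left_linear: "left_linear R"
    and PCP_bounded: "\<forall>(c1, c2) \<in> PCP R \<union> PCP_pm R (Bpm B). bounded_conv R c1 c2"
begin

lemma R_vars: "\<forall>(l, r) \<in> R. vars_term r \<subseteq> vars_term l"
  using R_gt gt_vars by auto

lemma Bpm_vars: "(l, r) \<in> Bpm B \<Longrightarrow> vars_term l = vars_term r"
  using B_vars unfolding Bpm_def by auto

lemma rstep_R_gt: "(s, t) \<in> rstep R \<Longrightarrow> (s, t) \<in> gt"
  using rstep_gt[OF R_gt] .

lemma prime_overlap_bounded_conv:
  assumes vars_X1: "\<forall>(l, r) \<in> X1. vars_term r \<subseteq> vars_term l"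
    and pcp: "\<forall>(c1, c2) \<in> pcp X1 X2 R. bounded_conv R c1 c2"
    and rules: "(l1, r1) \<in> X1" "(l2, r2) \<in> X2"
    and p: "p \<in> poss u" "subt_at u p = l2 \<cdot> \<sigma>2"
    and q: "q \<in> fun_poss l2" "subt_at (l2 \<cdot> \<sigma>2) q = l1 \<cdot> \<sigma>1"
    and prime: "prime_redex R (l1 \<cdot> \<sigma>1)"
  shows "bounded_conv R (replace_at u (p @ q) (r1 \<cdot> \<sigma>1)) (replace_at u p (r2 \<cdot> \<sigma>2))"
proof -
  have e: "replace_at u (p @ q) (r1 \<cdot> \<sigma>1) = replace_at u p (replace_at (l2 \<cdot> \<sigma>2) q (r1 \<cdot> \<sigma>1))"
    using replace_at_append[OF p(1)] p(2) by simp
  from overlap_instance_of_pcp[OF vars_infinite vars_X1 rules q prime]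
  show ?thesis
  proof
    assume "replace_at (l2 \<cdot> \<sigma>2) q (r1 \<cdot> \<sigma>1) = r2 \<cdot> \<sigma>2"
    then show ?thesis unfolding e by simp
  next
    assume "\<exists>c1 c2 \<delta>. (c1, c2) \<in> pcp X1 X2 R \<and>
      replace_at (l2 \<cdot> \<sigma>2) q (r1 \<cdot> \<sigma>1) = c1 \<cdot> \<delta> \<and> r2 \<cdot> \<sigma>2 = c2 \<cdot> \<delta>"
    then obtain c1 c2 \<delta> where c: "(c1, c2) \<in> pcp X1 X2 R"
      "replace_at (l2 \<cdot> \<sigma>2) q (r1 \<cdot> \<sigma>1) = c1 \<cdot> \<delta>" "r2 \<cdot> \<sigma>2 = c2 \<cdot> \<delta>" by blast
    have "bounded_conv R c1 c2" using pcp c(1) by auto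
    from bounded_conv_replace_at[OF bounded_conv_subst[OF this] p(1)] show ?thesis
      unfolding e c(2,3) .
  qed
qed

lemma left_linear_variable_overlap:
  assumes "(l, r) \<in> R" "p \<in> poss u" "subt_at u p = l \<cdot> \<sigma>" "q \<in> poss l" "subt_at l q = Var x"
    and "(\<sigma> x, s) \<in> rstep X"
  shows "(replace_at u p (replace_at (l \<cdot> \<sigma>) q s), replace_at u p (r \<cdot> \<sigma>(x := s))) \<in> rstep R"
    and "(replace_at u p (r \<cdot> \<sigma>), replace_at u p (r \<cdot> \<sigma>(x := s))) \<in> (rstep X)\<^sup>*"
proof -
  have "linear_term l" using R_left_linear assms(1) unfolding left_linear_def by auto
  then have "replace_at (l \<cdot> \<sigma>) q s = l \<cdot> \<sigma>(x := s)" using replace_at_linear_subst assms(4,5) by metis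
  then show "(replace_at u p (replace_at (l \<cdot> \<sigma>) q s), replace_at u p (r \<cdot> \<sigma>(x := s))) \<in> rstep R"
    using assms(1,2) by (intro rstepI[of l r R p _ "\<sigma>(x := s)"]) auto
  show "(replace_at u p (r \<cdot> \<sigma>), replace_at u p (r \<cdot> \<sigma>(x := s))) \<in> (rstep X)\<^sup>*"
    using rsteps_replace_at[OF rsteps_subst_fun_upd[where \<sigma> = \<sigma> and x = x, OF assms(6)] assms(2)] .
qed

text \<open>Without left-linearity of \<open>B\<close>, the \<open>R\<close>-step has to be repeated at all occurrences of \<open>x\<close>.\<close>
lemma Bpm_variable_overlap:
  assumes "(l, r) \<in> Bpm B" "p \<in> poss u" "q \<in> poss l" "subt_at l q = Var x" "(\<sigma> x, s) \<in> rstep R"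
  shows "\<exists>c. (replace_at u p (r \<cdot> \<sigma>), c) \<in> rstep R \<and>
    (c, replace_at u p (replace_at (l \<cdot> \<sigma>) q s)) \<in> join_mod B R"
proof -
  let ?a = "replace_at u p (l \<cdot> \<sigma>(x := s))" and ?b = "replace_at u p (r \<cdot> \<sigma>(x := s))"
  have ta: "(replace_at u p (replace_at (l \<cdot> \<sigma>) q s), ?a) \<in> (rstep R)\<^sup>*"
    using rsteps_replace_at[OF replace_at_subst_rsteps[where \<sigma> = \<sigma>, OF assms(3-5)] assms(2)] .
  have ab: "(?a, ?b) \<in> sim" using sim_replace_at[OF rstep_Bpm_sim[OF rstep_rule[OF assms(1)]] assms(2)] .
  have "x \<in> vars_term l" unfolding vars_term_poss using assms(3,4) by blast
  then have "x \<in> vars_term r" using Bpm_vars[OF assms(1)] by simp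
  moreover have "\<sigma> x \<noteq> s" using rstep_R_gt[OF assms(5)] gt_irrefl by auto
  ultimately have "(r \<cdot> \<sigma>, r \<cdot> \<sigma>(x := s)) \<in> (rstep R)\<^sup>+"
    using rsteps_subst_fun_upd_trancl[where \<sigma> = \<sigma> and x = x, OF assms(5)] by blast
  then obtain c where c: "(r \<cdot> \<sigma>, c) \<in> rstep R" "(c, r \<cdot> \<sigma>(x := s)) \<in> (rstep R)\<^sup>*"
    by (meson tranclD)
  have "(replace_at u p c, ?b) \<in> (rstep R)\<^sup>*" using rsteps_replace_at[OF c(2) assms(2)] .
  then have "(replace_at u p c, replace_at u p (replace_at (l \<cdot> \<sigma>) q s)) \<in> join_mod B R"
    using join_modI[OF _ sim_sym[OF ab] ta] by blast
  then show ?thesis using rstep_replace_at[OF c(1) assms(2)] by blast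
qed

lemma rr_peak_nested:
  assumes t: "(u, t) \<in> rstep_at R p" and v: "(u, v) \<in> rstep_at R (p @ q)"
    and smaller: "\<And>p1 t1 p3 t3. (u, t1) \<in> rstep_at R p1 \<Longrightarrow> (u, t3) \<in> rstep_at R p3 \<Longrightarrow>
      size (subt_at u p3) < size (subt_at u (p @ q)) \<Longrightarrow> (t1, t3) \<in> conv_below R u"
  shows "(t, v) \<in> conv_below R u"
proof -
  obtain l1 r1 \<sigma>1 where 1: "(l1, r1) \<in> R" "p \<in> poss u" "subt_at u p = l1 \<cdot> \<sigma>1"
    "t = replace_at u p (r1 \<cdot> \<sigma>1)"
    using t by (rule rstep_atE)
  obtain l2 r2 \<sigma>2 where 2: "(l2, r2) \<in> R" "p @ q \<in> poss u" "subt_at u (p @ q) = l2 \<cdot> \<sigma>2"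
    "v = replace_at u (p @ q) (r2 \<cdot> \<sigma>2)"
    using v by (rule rstep_atE)
  have ut: "(u, t) \<in> gt" and uv: "(u, v) \<in> gt"
    using t v rstep_R_gt rstep_at_imp_rstep by blast+
  have "q \<in> poss (l1 \<cdot> \<sigma>1)" using 1 2 by simp
  then show ?thesis
  proof (cases rule: poss_subst_cases)
    case fun_pos
    show ?thesis
    proof (cases "prime_redex R (l2 \<cdot> \<sigma>2)")
      case True
      have "pcp R R R = PCP R" by (simp add: PCP_def)
      then have "bounded_conv R v t"
        using prime_overlap_bounded_conv[OF R_vars _ 2(1) 1(1-3) fun_pos _ True] PCP_bounded 1 2 by auto
      then show ?thesis using conv_below_if_bounded_conv bounded_conv_sym ut uv by blast
    next
      case False
      then obtain p3 t3 where p3: "(u, t3) \<in> rstep_at R p3" "size (subt_at u p3) < size (subt_at u (p @ q))"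
        using non_prime_redex_inner_step[OF 2(2)] 2(3) by metis
      show ?thesis
        using conv_below_trans[OF smaller[OF t p3] conv_below_sym[OF smaller[OF v p3]]] .
    qed
  next
    case (var_pos q1 q2 x)
    obtain s where s: "(\<sigma>1 x, s) \<in> rstep R" "v = replace_at u p (replace_at (l1 \<cdot> \<sigma>1) q1 s)"
      using variable_overlap[of p q1 q2 u l1 \<sigma>1 x v R] var_pos 1 2 v by auto
    note overlap = left_linear_variable_overlap[OF 1(1-3) var_pos(2,3) s(1)]
    have "(t, v) \<in> join_mod B R"
      using join_modI[OF overlap(2)[folded 1(4)] sim_refl r_into_rtrancl[OF overlap(1)[folded s(2)]]] .
    then show ?thesis using conv_below_if_join_mod[OF R_gt] ut uv by blast
  qed
qed

lemma rr_peak_at_conv_below: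
  "(u, t) \<in> rstep_at R p1 \<Longrightarrow> (u, v) \<in> rstep_at R p2 \<Longrightarrow> (t, v) \<in> conv_below R u"
proof (induction "min (size (subt_at u p1)) (size (subt_at u p2))" arbitrary: p1 p2 t v rule: less_induct)
  case less
  have poss: "p1 \<in> poss u" "p2 \<in> poss u" using less.prems by (auto elim: rstep_atE)
  consider (below) q where "p2 = p1 @ q" | (above) q where "p1 = p2 @ q"
    | (parallel) r i j p q where "i \<noteq> j" "p1 = r @ i # p" "p2 = r @ j # q"
    by (rule pos_cases)
  then show ?case
  proof cases
    case (below q)
    have "size (subt_at u p2) \<le> size (subt_at u p1)" using size_subt_at_append_le poss below by blast
    then have smaller: "(t', t3) \<in> conv_below R u"
      if "(u, t') \<in> rstep_at R p'" "(u, t3) \<in> rstep_at R p3" "size (subt_at u p3) < size (subt_at u p2)"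
      for p' t' p3 t3
      using less.hyps[of p' p3] that by simp
    show ?thesis using rr_peak_nested[OF less.prems[unfolded below] smaller] below by simp
  next
    case (above q)
    have "size (subt_at u p1) \<le> size (subt_at u p2)" using size_subt_at_append_le poss above by blast
    then have smaller: "(t', t3) \<in> conv_below R u"
      if "(u, t') \<in> rstep_at R p'" "(u, t3) \<in> rstep_at R p3" "size (subt_at u p3) < size (subt_at u p1)"
      for p' t' p3 t3
      using less.hyps[of p' p3] that by simp
    have "(v, t) \<in> conv_below R u"
      using rr_peak_nested[OF less.prems(2) less.prems(1)[unfolded above] smaller] above by simp
    then show ?thesis by (rule conv_below_sym)
  next
    case parallel
    then obtain c where "(t, c) \<in> rstep R" "(v, c) \<in> rstep R"
      using parallel_peak less.prems by blast
    then have "(t, v) \<in> join_mod B R" using join_modI sim_refl by blast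
    moreover have "(u, t) \<in> gt" "(u, v) \<in> gt"
      using less.prems rstep_R_gt rstep_at_imp_rstep by blast+
    ultimately show ?thesis using conv_below_if_join_mod[OF R_gt] by blast
  qed
qed

lemma rr_peak_conv_below: "(u, t) \<in> rstep R \<Longrightarrow> (u, v) \<in> rstep R \<Longrightarrow> (t, v) \<in> conv_below R u"
  using rr_peak_at_conv_below unfolding rstep_eq_UN_rstep_at by blast

definition peak_resolved :: "('f, 'v) term \<Rightarrow> ('f, 'v) term \<Rightarrow> ('f, 'v) term \<Rightarrow> bool" where
  "peak_resolved u v t \<longleftrightarrow> (\<exists>c. (v, c) \<in> rstep R \<and> (c, t) \<in> conv_below R u)"

lemma peak_resolved_if_bounded_conv:
  "(u, v) \<in> sim \<Longrightarrow> (u, t) \<in> gt \<Longrightarrow> bounded_conv R v t \<Longrightarrow> peak_resolved u v t"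
  unfolding peak_resolved_def using bounded_conv_exit_step R_gt by blast

lemma peak_resolved_if_join_mod:
  assumes "(u, v) \<in> sim" "(u, t) \<in> gt" "(v, c) \<in> rstep R" "(c, t) \<in> join_mod B R"
  shows "peak_resolved u v t"
proof -
  have "(u, c) \<in> gt" using sim_gt[OF assms(1) rstep_R_gt[OF assms(3)]] .
  then show ?thesis
    unfolding peak_resolved_def using conv_below_if_join_mod[OF R_gt assms(4) _ assms(2)] assms(3) by blast
qed

lemma peak_resolved_conv_below:
  "peak_resolved u v t' \<Longrightarrow> (t', t) \<in> conv_below R u \<Longrightarrow> peak_resolved u v t"
  unfolding peak_resolved_def using conv_below_trans by blast

lemma rb_peak_B_below:
  assumes t: "(u, t) \<in> rstep_at R p" and v: "(u, v) \<in> rstep_at (Bpm B) (p @ q)"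
    and smaller: "\<And>p3 t3. (u, t3) \<in> rstep_at R p3 \<Longrightarrow> size (subt_at u p3) < size (subt_at u p) \<Longrightarrow>
      peak_resolved u v t3"
  shows "peak_resolved u v t"
proof -
  obtain l1 r1 \<sigma>1 where 1: "(l1, r1) \<in> R" "p \<in> poss u" "subt_at u p = l1 \<cdot> \<sigma>1"
    "t = replace_at u p (r1 \<cdot> \<sigma>1)"
    using t by (rule rstep_atE)
  obtain l2 r2 \<sigma>2 where 2: "(l2, r2) \<in> Bpm B" "p @ q \<in> poss u" "subt_at u (p @ q) = l2 \<cdot> \<sigma>2"
    "v = replace_at u (p @ q) (r2 \<cdot> \<sigma>2)"
    using v by (rule rstep_atE)
  have ut: "(u, t) \<in> gt" using t rstep_R_gt rstep_at_imp_rstep by blast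
  have uv: "(u, v) \<in> sim" using v rstep_Bpm_sim rstep_at_imp_rstep by blast
  have "q \<in> poss (l1 \<cdot> \<sigma>1)" using 1 2 by simp
  then show ?thesis
  proof (cases rule: poss_subst_cases)
    case fun_pos
    show ?thesis
    proof (cases "prime_redex R (l2 \<cdot> \<sigma>2)")
      case True
      have "\<forall>(l, r) \<in> Bpm B. vars_term r \<subseteq> vars_term l" using Bpm_vars by auto
      moreover have "\<forall>(c1, c2) \<in> pcp (Bpm B) R R. bounded_conv R c1 c2"
        using PCP_bounded unfolding PCP_pm_def by auto
      ultimately have "bounded_conv R v t"
        using prime_overlap_bounded_conv[OF _ _ 2(1) 1(1-3) fun_pos _ True] 1 2 by auto
      then show ?thesis using peak_resolved_if_bounded_conv uv ut by blast
    next
      case False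
      then obtain p3 t3 where p3: "(u, t3) \<in> rstep_at R p3" "size (subt_at u p3) < size (subt_at u (p @ q))"
        using non_prime_redex_inner_step[OF 2(2)] 2(3) by metis
      moreover have "size (subt_at u (p @ q)) \<le> size (subt_at u p)"
        using size_subt_at_append_le 2(2) by blast
      ultimately have "peak_resolved u v t3" using smaller by simp
      moreover have "(t3, t) \<in> conv_below R u"
        using rr_peak_conv_below[OF rstep_at_imp_rstep[OF p3(1)] rstep_at_imp_rstep[OF t]] .
      ultimately show ?thesis by (rule peak_resolved_conv_below)
    qed
  next
    case (var_pos q1 q2 x)
    obtain s where s: "(\<sigma>1 x, s) \<in> rstep (Bpm B)" "v = replace_at u p (replace_at (l1 \<cdot> \<sigma>1) q1 s)"
      using variable_overlap[of p q1 q2 u l1 \<sigma>1 x v "Bpm B"] var_pos 1 2 v by auto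
    note overlap = left_linear_variable_overlap[OF 1(1-3) var_pos(2,3) s(1)]
    have "(replace_at u p (r1 \<cdot> \<sigma>1(x := s)), t) \<in> join_mod B R"
      using join_modI[OF rtrancl_refl sim_sym[OF rsteps_Bpm_sim[OF overlap(2)]] rtrancl_refl] 1(4) by simp
    then show ?thesis using peak_resolved_if_join_mod uv ut overlap(1) s(2) by blast
  qed
qed

lemma rb_peak_R_below:
  assumes t: "(u, t) \<in> rstep_at R (p @ q)" and v: "(u, v) \<in> rstep_at (Bpm B) p"
    and smaller: "\<And>p3 t3. (u, t3) \<in> rstep_at R p3 \<Longrightarrow> size (subt_at u p3) < size (subt_at u (p @ q)) \<Longrightarrow>
      peak_resolved u v t3"
  shows "peak_resolved u v t"
proof -
  obtain l1 r1 \<sigma>1 where 1: "(l1, r1) \<in> R" "p @ q \<in> poss u" "subt_at u (p @ q) = l1 \<cdot> \<sigma>1"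
    "t = replace_at u (p @ q) (r1 \<cdot> \<sigma>1)"
    using t by (rule rstep_atE)
  obtain l2 r2 \<sigma>2 where 2: "(l2, r2) \<in> Bpm B" "p \<in> poss u" "subt_at u p = l2 \<cdot> \<sigma>2"
    "v = replace_at u p (r2 \<cdot> \<sigma>2)"
    using v by (rule rstep_atE)
  have ut: "(u, t) \<in> gt" using t rstep_R_gt rstep_at_imp_rstep by blast
  have uv: "(u, v) \<in> sim" using v rstep_Bpm_sim rstep_at_imp_rstep by blast
  have "q \<in> poss (l2 \<cdot> \<sigma>2)" using 1 2 by simp
  then show ?thesis
  proof (cases rule: poss_subst_cases)
    case fun_pos
    show ?thesis
    proof (cases "prime_redex R (l1 \<cdot> \<sigma>1)")
      case True
      have "\<forall>(c1, c2) \<in> pcp R (Bpm B) R. bounded_conv R c1 c2"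
        using PCP_bounded unfolding PCP_pm_def by auto
      then have "bounded_conv R t v"
        using prime_overlap_bounded_conv[OF R_vars _ 1(1) 2(1-3) fun_pos _ True] 1 2 by auto
      then show ?thesis using peak_resolved_if_bounded_conv bounded_conv_sym uv ut by blast
    next
      case False
      then obtain p3 t3 where "(u, t3) \<in> rstep_at R p3" "size (subt_at u p3) < size (subt_at u (p @ q))"
        using non_prime_redex_inner_step[OF 1(2)] 1(3) by metis
      then have "peak_resolved u v t3" by (rule smaller)
      moreover have "(t3, t) \<in> conv_below R u"
        using rr_peak_conv_below[OF rstep_at_imp_rstep rstep_at_imp_rstep] \<open>(u, t3) \<in> rstep_at R p3\<close> t
        by blast
      ultimately show ?thesis by (rule peak_resolved_conv_below)
    qed
  next
    case (var_pos q1 q2 x)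
    obtain s where s: "(\<sigma>2 x, s) \<in> rstep R" "t = replace_at u p (replace_at (l2 \<cdot> \<sigma>2) q1 s)"
      using variable_overlap[of p q1 q2 u l2 \<sigma>2 x t R] var_pos 1 2 t by auto
    then show ?thesis
      using Bpm_variable_overlap[where \<sigma> = \<sigma>2, OF 2(1,2) var_pos(2,3) s(1)] peak_resolved_if_join_mod uv ut 2(4) by blast
  qed
qed

lemma rb_peak_at_resolved:
  "(u, t) \<in> rstep_at R p1 \<Longrightarrow> (u, v) \<in> rstep_at (Bpm B) p2 \<Longrightarrow> peak_resolved u v t"
proof (induction "size (subt_at u p1)" arbitrary: p1 t rule: less_induct)
  case less
  consider (below) q where "p2 = p1 @ q" | (above) q where "p1 = p2 @ q"
    | (parallel) r i j p q where "i \<noteq> j" "p1 = r @ i # p" "p2 = r @ j # q"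
    by (rule pos_cases)
  then show ?case
  proof cases
    case below
    then show ?thesis using rb_peak_B_below less by blast
  next
    case above
    then show ?thesis using rb_peak_R_below less by blast
  next
    case parallel
    then obtain c where c: "(t, c) \<in> rstep (Bpm B)" "(v, c) \<in> rstep R"
      using parallel_peak less.prems by blast
    have "(c, t) \<in> join_mod B R"
      using join_modI[OF _ sim_sym[OF rstep_Bpm_sim[OF c(1)]]] by blast
    moreover have "(u, v) \<in> sim" "(u, t) \<in> gt"
      using less.prems rstep_Bpm_sim rstep_R_gt rstep_at_imp_rstep by blast+
    ultimately show ?thesis using peak_resolved_if_join_mod c(2) by blast
  qed
qed

lemma rb_peak_resolved: "(u, t) \<in> rstep R \<Longrightarrow> (u, v) \<in> sym_step B \<Longrightarrow> peak_resolved u v t"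
  using rb_peak_at_resolved unfolding sym_step_Bpm rstep_eq_UN_rstep_at by blast

section \<open>Church--Rosser modulo \<open>B\<close>\<close>

lemma NF_exists: "\<exists>n. (s, n) \<in> (rstep R)\<^sup>* \<and> NF R n"
proof (induction s rule: wf_induct[OF wf_converse_gt])
  case (1 s)
  show ?case
  proof (cases "NF R s")
    case False
    then obtain t where t: "(s, t) \<in> rstep R" unfolding NF_def by auto
    with 1 obtain n where "(t, n) \<in> (rstep R)\<^sup>*" "NF R n" using rstep_R_gt by blast
    then show ?thesis using t by (meson converse_rtrancl_into_rtrancl)
  qed auto
qed

lemma sim_rstep_commute:
  assumes "(s, s') \<in> sim" "(s, t) \<in> rstep R"
  shows "\<exists>t'. (s', t') \<in> rstep R \<and> (t, t') \<in> conv_below R s"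
  using assms(1) unfolding simB_def conv_def
proof (induction rule: rtrancl_induct)
  case base
  then show ?case using assms(2) unfolding conv_below_def by auto
next
  case (step w w')
  obtain tw where tw: "(w, tw) \<in> rstep R" "(t, tw) \<in> conv_below R s" using step.IH by blast
  obtain c where c: "(w', c) \<in> rstep R" "(c, tw) \<in> conv_below R w"
    using rb_peak_resolved[OF tw(1) step.hyps(2)] unfolding peak_resolved_def by blast
  have "conv_below R w = conv_below R s"
    using step.hyps(1) conv_below_sim unfolding simB_def conv_def by blast
  then show ?case using c tw conv_below_trans conv_below_sym by blast
qed

lemma NF_sim: "(s, t) \<in> sim \<Longrightarrow> NF R s \<Longrightarrow> NF R t"
  using sim_rstep_commute[OF sim_sym] unfolding NF_def by blast

definition unique_NF_mod :: "('f, 'v) term \<Rightarrow> bool" where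
  "unique_NF_mod u \<longleftrightarrow> (\<forall>s1 s2 n1 n2. (u, s1) \<in> sim \<longrightarrow> (u, s2) \<in> sim \<longrightarrow>
     (s1, n1) \<in> (rstep R)\<^sup>* \<longrightarrow> NF R n1 \<longrightarrow> (s2, n2) \<in> (rstep R)\<^sup>* \<longrightarrow> NF R n2 \<longrightarrow> (n1, n2) \<in> sim)"

lemma unique_NF_modD:
  "unique_NF_mod u \<Longrightarrow> (u, s1) \<in> sim \<Longrightarrow> (u, s2) \<in> sim \<Longrightarrow> (s1, n1) \<in> (rstep R)\<^sup>* \<Longrightarrow> NF R n1 \<Longrightarrow>
    (s2, n2) \<in> (rstep R)\<^sup>* \<Longrightarrow> NF R n2 \<Longrightarrow> (n1, n2) \<in> sim"
  unfolding unique_NF_mod_def by blast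

lemma sym_step_NF_sim:
  assumes "(s, t) \<in> sym_step (R \<union> B)" "unique_NF_mod s" "unique_NF_mod t"
    and "(s, m) \<in> (rstep R)\<^sup>*" "NF R m" "(t, n) \<in> (rstep R)\<^sup>*" "NF R n"
  shows "(m, n) \<in> sim"
proof -
  have "(s, t) \<in> rstep R \<or> (t, s) \<in> rstep R \<or> (s, t) \<in> sim"
    using assms(1) unfolding sym_step_def rstep_union simB_def conv_def by auto
  then show ?thesis
  proof (elim disjE)
    assume "(s, t) \<in> rstep R"
    then have "(s, n) \<in> (rstep R)\<^sup>*" using assms(6) by (rule converse_rtrancl_into_rtrancl)
    from unique_NF_modD[OF assms(2) sim_refl sim_refl assms(4,5) this assms(7)] show ?thesis .
  next
    assume "(t, s) \<in> rstep R"
    then have "(t, m) \<in> (rstep R)\<^sup>*" using assms(4) by (rule converse_rtrancl_into_rtrancl)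
    from unique_NF_modD[OF assms(3) sim_refl sim_refl this assms(5) assms(6,7)] show ?thesis .
  next
    assume "(s, t) \<in> sim"
    from unique_NF_modD[OF assms(2) sim_refl this assms(4-7)] show ?thesis .
  qed
qed

lemma conv_below_NF_sim:
  assumes unique: "\<forall>w \<in> below u. unique_NF_mod w"
    and st: "(s, t) \<in> conv_below R u" and s: "s \<in> below u"
    and m: "(s, m) \<in> (rstep R)\<^sup>*" "NF R m"
  shows "(t, n) \<in> (rstep R)\<^sup>* \<Longrightarrow> NF R n \<Longrightarrow> (m, n) \<in> sim"
  using st unfolding conv_below_def
proof (induction arbitrary: n rule: rtrancl_induct)
  case base
  then show ?case using unique_NF_modD[OF _ sim_refl sim_refl m] unique s by blast
next
  case (step y z)
  obtain k where k: "(y, k) \<in> (rstep R)\<^sup>*" "NF R k" using NF_exists by blast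
  have "(y, z) \<in> sym_step (R \<union> B)" "y \<in> below u" "z \<in> below u" using step.hyps(2) by auto
  then have "(k, n) \<in> sim" using sym_step_NF_sim[OF _ _ _ k step.prems] unique by blast
  then show ?case using step.IH[OF k] sim_trans by blast
qed

text \<open>By well-founded induction on \<open>>\<close>: two normal forms of terms \<open>B\<close>-equivalent to \<open>u\<close> arise
  from first steps whose peak is resolved below \<open>u\<close>, where the hypothesis applies.\<close>
lemma unique_NF_mod_all: "unique_NF_mod u"
proof (induction u rule: wf_induct[OF wf_converse_gt])
  case (1 u)
  then have unique: "\<forall>w \<in> below u. unique_NF_mod w" unfolding below_def by blast
  show ?case unfolding unique_NF_mod_def
  proof (intro allI impI)
    fix s1 s2 n1 n2
    assume s1: "(u, s1) \<in> sim" and s2: "(u, s2) \<in> sim"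
      and n1: "(s1, n1) \<in> (rstep R)\<^sup>*" "NF R n1" and n2: "(s2, n2) \<in> (rstep R)\<^sup>*" "NF R n2"
    have s12: "(s1, s2) \<in> sim" using s1 s2 sim_sym sim_trans by blast
    show "(n1, n2) \<in> sim"
    proof (cases "NF R s1")
      case True
      then have "NF R s2" using NF_sim s12 by blast
      then show ?thesis using NF_rsteps True n1 n2 s12 by metis
    next
      case False
      then obtain t1 where t1: "(s1, t1) \<in> rstep R" "(t1, n1) \<in> (rstep R)\<^sup>*"
        using n1 NF_rsteps by (metis converse_rtranclE)
      have "\<not> NF R s2" using False NF_sim sim_sym[OF s12] by blast
      then obtain t2 where t2: "(s2, t2) \<in> rstep R" "(t2, n2) \<in> (rstep R)\<^sup>*"
        using n2 NF_rsteps by (metis converse_rtranclE)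
      obtain t' where t': "(s2, t') \<in> rstep R" "(t1, t') \<in> conv_below R s1"
        using sim_rstep_commute[OF s12 t1(1)] by blast
      have "(t', t2) \<in> conv_below R s2" using rr_peak_conv_below[OF t'(1) t2(1)] .
      moreover have "conv_below R s1 = conv_below R u" "conv_below R s2 = conv_below R u"
        using conv_below_sim s1 s2 by auto
      ultimately have "(t1, t2) \<in> conv_below R u" using t' conv_below_trans by auto
      moreover have "t1 \<in> below u" using sim_gt[OF s1 rstep_R_gt[OF t1(1)]] unfolding below_def by simp
      ultimately show ?thesis using conv_below_NF_sim[OF unique _ _ t1(2) n1(2) t2(2) n2(2)] by blast
    qed
  qed
qed

lemma CR_mod: "CR_mod B R"
  unfolding CR_mod_def
proof clarify
  fix s t assume "(s, t) \<in> conv (R \<union> B)"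
  then have st: "(s, t) \<in> (sym_step (R \<union> B))\<^sup>*" unfolding conv_def .
  obtain m where m: "(s, m) \<in> (rstep R)\<^sup>*" "NF R m" using NF_exists by blast
  obtain n where n: "(t, n) \<in> (rstep R)\<^sup>*" "NF R n" using NF_exists by blast
  have "(m, n') \<in> sim" if "(t', n') \<in> (rstep R)\<^sup>*" "NF R n'" "(s, t') \<in> (sym_step (R \<union> B))\<^sup>*" for t' n'
    using that(3,1,2)
  proof (induction arbitrary: n' rule: rtrancl_induct)
    case base
    then show ?case using unique_NF_modD[OF unique_NF_mod_all sim_refl sim_refl m] by blast
  next
    case (step y z)
    obtain k where k: "(y, k) \<in> (rstep R)\<^sup>*" "NF R k" using NF_exists by blast
    show ?case
      using sim_trans[OF step.IH[OF k] sym_step_NF_sim[OF step.hyps(2) unique_NF_mod_all unique_NF_mod_all k step.prems]] .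
  qed
  then have "(m, n) \<in> sim" using n st by blast
  then show "(s, t) \<in> join_mod B R" using join_modI[OF m(1) _ n(1)] by blast
qed

end

section \<open>Runs of the inference system\<close>

context compatible_order
begin

lemma IB_step_rules_gt:
  assumes "IB_step gt B (E, R) (E', R')" "R \<subseteq> gt"
  shows "R' \<subseteq> gt"
  using assms(1)
proof cases
  case (compose s t u)
  then have "(t, u) \<in> gt" using rstep_gt[of "R - {(s, t)}" t u] assms(2) by auto
  then have "(s, u) \<in> gt" using compose assms(2) gt_trans by blast
  then show ?thesis using compose assms(2) by auto
qed (use assms(2) in auto)

lemma IB_step_conv_subset:
  assumes "IB_step gt B (E, R) (E', R')" "Bpm B \<subseteq> conv F" "E \<union> R \<subseteq> conv F"
  shows "E' \<union> R' \<subseteq> conv F"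
proof -
  have rstep_C: "(s, t) \<in> rstep X \<Longrightarrow> X \<subseteq> conv F \<Longrightarrow> (s, t) \<in> conv F" for X s t
    using rstep_subset_conv_if_subset by blast
  from assms(1) show ?thesis
  proof cases
    case (deduce u s t)
    have "(u, s) \<in> conv F" "(u, t) \<in> conv F"
      using deduce rstep_C[of u s R] rstep_C[of u t "R \<union> Bpm B"] assms(2,3) by auto
    then show ?thesis using deduce assms(3) by (auto intro: conv_trans conv_sym)
  next
    case (simplify_l s t u)
    have "(s, u) \<in> conv F" "(s, t) \<in> conv F" using simplify_l rstep_C[of s u R] assms(3) by auto
    then show ?thesis using simplify_l assms(3) by (auto intro: conv_trans conv_sym)
  next
    case (simplify_r t s u)
    have "(s, u) \<in> conv F" "(t, s) \<in> conv F" using simplify_r rstep_C[of s u R] assms(3) by auto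
    then show ?thesis using simplify_r assms(3) by (auto intro: conv_trans conv_sym)
  next
    case (collapse s t u)
    have "(s, u) \<in> conv F" "(s, t) \<in> conv F"
      using collapse rstep_C[of s u "R - {(s, t)}"] assms(3) by auto
    then show ?thesis using collapse assms(3) by (auto intro: conv_trans conv_sym)
  next
    case (compose s t u)
    have "(t, u) \<in> conv F" "(s, t) \<in> conv F"
      using compose rstep_C[of t u "R - {(s, t)}"] assms(3) by auto
    then show ?thesis using compose assms(3) by (auto intro: conv_trans)
  qed (use assms(3) in \<open>auto intro: conv_sym\<close>)
qed

lemma IB_run_sound:
  assumes "IB_run gt B E run n" "i \<le> n"
  shows "snd (run i) \<subseteq> gt \<and> fst (run i) \<union> snd (run i) \<subseteq> conv (E \<union> B)"
  using assms(2)
proof (induction i)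
  case 0
  have "run 0 = (E, {})" using assms(1) unfolding IB_run_def by auto
  then show ?case using subset_conv[of "E \<union> B"] by auto
next
  case (Suc i)
  have step: "IB_step gt B (fst (run i), snd (run i)) (fst (run (Suc i)), snd (run (Suc i)))"
    using assms(1) Suc.prems unfolding IB_run_def by auto
  have "Bpm B \<subseteq> conv (E \<union> B)" using subset_conv[of "E \<union> B"] conv_sym unfolding Bpm_def by blast
  then show ?case
    using Suc IB_step_rules_gt[OF step] IB_step_conv_subset[OF step] by auto
qed

lemma IB_step_bounded_conv:
  assumes step: "IB_step gt B (E, R') (E', R'')" and R': "R' \<subseteq> gt"
    and bounded: "\<forall>(s, t) \<in> E' \<union> R''. bounded_conv R s t"
  shows "\<forall>(s, t) \<in> E \<union> R'. bounded_conv R s t"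
proof -
  have bounded_if_insert: "\<forall>(s, t) \<in> E \<union> R'. bounded_conv R s t"
    if "E \<union> R' \<subseteq> insert (a, b) (E' \<union> R'')" "bounded_conv R a b" for a b
    using that bounded by fast
  have bounded_rules: "\<forall>(l, r) \<in> X. bounded_conv R l r" if "X \<subseteq> E' \<union> R''" for X
    using that bounded by fast
  from step show ?thesis
  proof cases
    case (orient_r t s)
    then show ?thesis using bounded bounded_conv_sym by (intro bounded_if_insert[of t s]) auto
  next
    case (delete s t)
    then show ?thesis using bounded_conv_if_sim by (intro bounded_if_insert[of s t]) auto
  next
    case (simplify_l s t u)
    then have "bounded_conv R s t"
      using bounded_conv_rstep_trans[OF R' bounded_rules] bounded by auto
    then show ?thesis using simplify_l by (intro bounded_if_insert[of s t]) auto
  next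
    case (simplify_r t s u)
    then have "bounded_conv R s t"
      using bounded_conv_rstep_trans[OF R' bounded_rules] bounded by auto
    then show ?thesis using simplify_r bounded_conv_sym by (intro bounded_if_insert[of t s]) auto
  next
    case (collapse s t u)
    then have "bounded_conv R s t"
      using bounded_conv_rstep_trans[of "R' - {(s, t)}", OF _ bounded_rules] R' bounded by auto
    then show ?thesis using collapse by (intro bounded_if_insert[of s t]) auto
  next
    case (compose s t u)
    have "bounded_conv R u s" using compose bounded bounded_conv_sym by auto
    moreover have "R' - {(s, t)} \<subseteq> gt" "\<forall>(l, r) \<in> R' - {(s, t)}. bounded_conv R l r"
      using compose R' by (auto intro!: bounded_rules)
    ultimately have "bounded_conv R t s"
      using bounded_conv_rstep_trans \<open>(t, u) \<in> rstep (R' - {(s, t)})\<close> by blast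
    then show ?thesis using compose bounded_conv_sym by (intro bounded_if_insert[of s t]) auto
  qed (use bounded in auto)
qed

lemma IB_run_bounded_conv:
  assumes run: "IB_run gt B E run n" and final: "run n = ({}, R)" and "i \<le> n"
  shows "\<forall>(s, t) \<in> fst (run i) \<union> snd (run i). bounded_conv R s t"
  using assms(3)
proof (induction i rule: inc_induct)
  case base
  have "R \<subseteq> gt" using IB_run_sound[OF run, of n] final by auto
  then show ?case using final bounded_conv_rstep_left[OF _ rstep_rule[of _ _ R Var]] by auto
next
  case (step i)
  have "IB_step gt B (fst (run i), snd (run i)) (fst (run (Suc i)), snd (run (Suc i)))"
    using run step.hyps unfolding IB_run_def by auto
  then show ?case
    using IB_step_bounded_conv IB_run_sound[OF run] step by (metis Suc_leD less_imp_le_nat)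
qed

lemma IB_run_conv_eq:
  assumes run: "IB_run gt B E run n" and final: "run n = ({}, R)"
  shows "conv (E \<union> B) = conv (R \<union> B)"
proof
  have "run 0 = (E, {})" using run unfolding IB_run_def by auto
  then have "E \<subseteq> conv (R \<union> B)"
    using IB_run_bounded_conv[OF run final, of 0] bounded_conv_imp_conv by auto
  then show "conv (E \<union> B) \<subseteq> conv (R \<union> B)"
    using subset_conv[of "R \<union> B"] by (intro conv_subset_conv_if_subset) auto
next
  have "R \<subseteq> conv (E \<union> B)" using IB_run_sound[OF run, of n] final by auto
  then show "conv (R \<union> B) \<subseteq> conv (E \<union> B)"
    using subset_conv[of "E \<union> B"] by (intro conv_subset_conv_if_subset) auto
qed

lemma fair_run_bounded_PCP:
  assumes run: "IB_run gt B E run n" and final: "run n = ({}, R)" and fair: "fair_run B run n"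
  shows "\<forall>(c1, c2) \<in> PCP R \<union> PCP_pm R (Bpm B). bounded_conv R c1 c2"
proof clarify
  fix c1 c2 assume "(c1, c2) \<in> PCP R \<union> PCP_pm R (Bpm B)"
  then have "(c1, c2) \<in> join_mod B R \<or> (\<exists>i \<le> n. (c1, c2) \<in> sym_step (fst (run i)))"
    using fair final unfolding fair_run_def by auto
  then show "bounded_conv R c1 c2"
  proof
    assume "(c1, c2) \<in> join_mod B R"
    moreover have "R \<subseteq> gt" using IB_run_sound[OF run, of n] final by auto
    ultimately show ?thesis using bounded_conv_if_join_mod by blast
  next
    assume "\<exists>i \<le> n. (c1, c2) \<in> sym_step (fst (run i))"
    then obtain i where "i \<le> n" "(c1, c2) \<in> sym_step (fst (run i))" by blast
    moreover have "\<forall>(s, t) \<in> fst (run i). bounded_conv R s t"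
      using IB_run_bounded_conv[OF run final \<open>i \<le> n\<close>] by blast
    ultimately show ?thesis using bounded_conv_sym_step by blast
  qed
qed

end

theorem corollary5p7:
  fixes gt B E R :: "('f, 'v) trs"
    and run :: "nat \<Rightarrow> ('f, 'v) trs \<times> ('f, 'v) trs"
    and n :: nat
  assumes vars_inf: "infinite (UNIV :: 'v set)"
    and B_vars: "\<forall>(l, r) \<in> B. vars_term l = vars_term r"
    and order: "B_compatible_reduction_order B gt"
    and run: "IB_run gt B E run n"
    and final: "run n = ({}, R)"
    and fair: "fair_run B run n"
  shows "conv (E \<union> B) = conv (R \<union> B) \<and> SN_mod B R \<and> CR_mod B R"
proof -
  interpret compatible_order gt B using order by unfold_locales
  have R_gt: "R \<subseteq> gt" using IB_run_sound[OF run, of n] final by auto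
  have "left_linear R" using fair final unfolding fair_run_def by auto
  then interpret bounded_critical_pairs gt B R
    using vars_inf B_vars R_gt fair_run_bounded_PCP[OF run final fair] by unfold_locales
  show ?thesis using IB_run_conv_eq[OF run final] SN_mod_if_subset_gt[OF R_gt] CR_mod by blast
qed

end
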